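(* Let $\mathcal{JS}=(\mathcal F,\mathcal F_d,R,\mathcal B)$ be a justification system whose frame is complementary and whose branch evaluation $\mathcal B$ is consistent. Let $\tau$ be a positional (respectively general) strategy for $F$, $x\in\mathcal F_d$, and $n$ the node of $J_\tau(x)$ labelled $\sim x$ (respectively the root node of the tree $J_\tau(x)$, corresponding to the one-state path $x$). Then for every interpretation $\mathcal I$, $$\mathrm{val}(J_\tau(x),n,\mathcal I)=\sim\bigvee_{\sigma\in\mathfrak S_g(T)}u(x,\sigma,\tau).$$
   Context: Let $\mathcal F$ be a set (fact space) containing $\mathcal L=\{\mathbf t,\mathbf f,\mathbf u\}$ with an involution $\sim$ satisfying $\sim\mathbf t=\mathbf f$, $\sim\mathbf u=\mathbf u$, $\sim x\ne x$ for $x\ne\mathbf u$; $\sim A=\{\sim a:a\in A\}$. Truth order $\mathbf f<_t\mathbf u<_t\mathbf t$; $\bigwedge,\bigvee$ are glb/lub in $(\mathcal L,\le_t)$; $\sim$ reverses $\le_t$. A justification frame is $\mathcal{JF}=(\mathcal F,\mathcal F_d,R)$ with $\mathcal F_d\subseteq\mathcal F$, $\sim\mathcal F_d=\mathcal F_d$, $\mathcal F_d\cap\mathcal L=\emptyset$, $R\subseteq\mathcal F_d\times2^{\mathcal F}$ a set of rules $x\gets A$ with nonempty bodies, every $x\in\mathcal F_d$ heading a rule; $\mathcal F_o=\mathcal F\setminus\mathcal F_d$. A selection function for $x\in\mathcal F_d$ assigns to every body $A$ of a rule $x\gets A$ an element $s(A)\in A$; $\mathrm{Im}(s)$ is its image.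 $R^*$ is the set of rules $\sim x\gets\sim\mathrm{Im}(s)$ ($x\in\mathcal F_d$, $s$ a selection function for $x$); the frame is complementary if $R^*=R$. A justification is a directed graph $(N,E)$ with labelling $\ell:N\to\mathcal F$ such that every internal node $n$ has $\ell(n)\in\mathcal F_d$ and $\ell(n)\gets\{\ell(m):(n,m)\in E\}\in R$; locally complete if no leaf is labelled by a defined fact. A $\mathcal{JF}$-branch is an infinite sequence of defined facts or a finite sequence $x_0\to\cdots\to x_k$ ($k\ge1$) with $x_0,\dots,x_{k-1}\in\mathcal F_d$, $x_k\in\mathcal F_o$; $\sim b$ applies $\sim$ elementwise. $B_J(n)$ is the set of label sequences of maximal paths of $J$ starting at node $n$. A branch evaluation $\mathcal B$ maps $\mathcal{JF}$-branches to elements of $\mathcal F$; it is consistent if $\mathcal B(\sim b)=\sim\mathcal B(b)$ for all $b$. An interpretation is $\mathcal I:\mathcal F\to\mathcal L$ with $\mathcal I(\sim x)=\sim\mathcal I(x)$, $\mathcal I(l)=l$ on $\mathcal L$. $\mathrm{val}(J,n,\mathcal I)=\bigwedge_{b\in B_J(n)}\mathcal I(\mathcal B(b))$. Game graph $G_{\mathcal{JF}}$: states $S_T=\mathcal F$ (owned by $T$), $S_F=\{r_{x\gets A}:x\gets A\in R\}$ (owned by $F$), edges $(x,r_{x\gets A})$ and $(r_{x\gets A},y)$ for each rule $x\gets A$, $y\in A$. A play is an infinite path or a finite path ending in a state with no outgoing edge. A general strategy for $P\in\{T,F\}$ maps each finite path whose last state $s\in S_P$ has an outgoing edge to an outgoing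 edge of $s$; positional strategies depend only on the last state; $\mathfrak S_g(P)$ is the set of general strategies. A path $s_0s_1\cdots$ is consistent with a strategy $\rho$ of $P$ if $\rho(s_0\cdots s_i)=(s_i,s_{i+1})$ whenever $s_i\in S_P$ and $s_{i+1}$ exists; $\mathrm{play}(s,\sigma,\tau)$ is the unique play from $s$ consistent with $\sigma$ (for $T$) and $\tau$ (for $F$). For a play $p$, $b_p$ deletes rule symbols; $u(x,\sigma,\tau)=\mathcal I(\mathcal B(b_{\mathrm{play}(x,\sigma,\tau)}))$. The play tree of a general strategy $\rho$ in $x$ has as nodes the finite paths from $x$ consistent with $\rho$, labelled by their last state, with edges to one-step extensions; the play graph of a positional $\rho$ in $x$ is the subgraph of $G_{\mathcal{JF}}$ of states and edges on paths from $x$ consistent with $\rho$. Filtering out rule symbols: delete rule-symbol nodes and add $(n,m)$ whenever $(n,k),(k,m)$ were edges with $k$ a rule-symbol node. For a strategy $\tau$ of $F$, $J_\tau(x)$ is the filtered play graph (positional $\tau$) or filtered play tree (general $\tau$) of $\tau$ in $x$ with every label $y$ replaced by $\sim y$. *)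

theory Defs
  imports Main "HOL-Library.Stream"
begin

datatype tv = TT | FF | UU

fun tv_neg :: "tv \<Rightarrow> tv" where
  "tv_neg TT = FF" | "tv_neg FF = TT" | "tv_neg UU = UU"

fun tv_rank :: "tv \<Rightarrow> nat" where
  "tv_rank FF = 0" | "tv_rank UU = 1" | "tv_rank TT = 2"

definition tv_le :: "tv \<Rightarrow> tv \<Rightarrow> bool" where
  "tv_le a b \<longleftrightarrow> tv_rank a \<le> tv_rank b"

definition tv_Inf :: "tv set \<Rightarrow> tv" where
  "tv_Inf S = (if FF \<in> S then FF else if UU \<in> S then UU else TT)"

definition tv_Sup :: "tv set \<Rightarrow> tv" where
  "tv_Sup S = (if TT \<in> S then TT else if UU \<in> S then UU else FF)"

text \<open>The fact space F is the universe of the type 'f; lit embeds L = {t,f,u}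
  into it and neg is the involution \<sim>.\<close>
definition fact_space :: "('f \<Rightarrow> 'f) \<Rightarrow> (tv \<Rightarrow> 'f) \<Rightarrow> bool" where
  "fact_space neg lit \<longleftrightarrow> inj lit \<and> (\<forall>x. neg (neg x) = x) \<and>
     neg (lit TT) = lit FF \<and> neg (lit UU) = lit UU \<and>
     (\<forall>x. x \<noteq> lit UU \<longrightarrow> neg x \<noteq> x)"

definition just_frame :: "('f \<Rightarrow> 'f) \<Rightarrow> (tv \<Rightarrow> 'f) \<Rightarrow> 'f set \<Rightarrow> ('f \<times> 'f set) set \<Rightarrow> bool" where
  "just_frame neg lit Fd R \<longleftrightarrow> neg ` Fd = Fd \<and> Fd \<inter> range lit = {} \<and>
     (\<forall>(x, A) \<in> R. x \<in> Fd \<and> A \<noteq> {}) \<and> (\<forall>x \<in> Fd. \<exists>A. (x, A) \<in> R)"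

definition selection_fun :: "('f \<times> 'f set) set \<Rightarrow> 'f \<Rightarrow> ('f set \<Rightarrow> 'f) \<Rightarrow> bool" where
  "selection_fun R x s \<longleftrightarrow> (\<forall>A. (x, A) \<in> R \<longrightarrow> s A \<in> A)"

definition sel_image :: "('f \<times> 'f set) set \<Rightarrow> 'f \<Rightarrow> ('f set \<Rightarrow> 'f) \<Rightarrow> 'f set" where
  "sel_image R x s = {s A | A. (x, A) \<in> R}"

definition Rstar :: "('f \<Rightarrow> 'f) \<Rightarrow> 'f set \<Rightarrow> ('f \<times> 'f set) set \<Rightarrow> ('f \<times> 'f set) set" where
  "Rstar neg Fd R = {(neg x, neg ` sel_image R x s) | x s. x \<in> Fd \<and> selection_fun R x s}"

definition complementary :: "('f \<Rightarrow> 'f) \<Rightarrow> 'f set \<Rightarrow> ('f \<times> 'f set) set \<Rightarrow> bool" where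
  "complementary neg Fd R \<longleftrightarrow> Rstar neg Fd R = R"

datatype 'a branch = BFin "'a list" | BInf "'a stream"

definition is_branch :: "'f set \<Rightarrow> 'f branch \<Rightarrow> bool" where
  "is_branch Fd b = (case b of
      BFin xs \<Rightarrow> length xs \<ge> 2 \<and> (\<forall>i < length xs - 1. xs ! i \<in> Fd) \<and> last xs \<notin> Fd
    | BInf s \<Rightarrow> (\<forall>i. s !! i \<in> Fd))"

fun bmap :: "('a \<Rightarrow> 'b) \<Rightarrow> 'a branch \<Rightarrow> 'b branch" where
  "bmap f (BFin xs) = BFin (map f xs)"
| "bmap f (BInf s) = BInf (smap f s)"

definition consistent_be :: "('f \<Rightarrow> 'f) \<Rightarrow> 'f set \<Rightarrow> ('f branch \<Rightarrow> 'f) \<Rightarrow> bool" where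
  "consistent_be neg Fd B \<longleftrightarrow> (\<forall>b. is_branch Fd b \<longrightarrow> B (bmap neg b) = neg (B b))"

definition is_interp :: "('f \<Rightarrow> 'f) \<Rightarrow> (tv \<Rightarrow> 'f) \<Rightarrow> ('f \<Rightarrow> tv) \<Rightarrow> bool" where
  "is_interp neg lit I \<longleftrightarrow> (\<forall>x. I (neg x) = tv_neg (I x)) \<and> (\<forall>l. I (lit l) = l)"

type_synonym ('n, 'l) lgraph = "'n set \<times> ('n \<times> 'n) set \<times> ('n \<Rightarrow> 'l)"

definition BJ :: "('n, 'f) lgraph \<Rightarrow> 'n \<Rightarrow> 'f branch set" where
  "BJ J n = (case J of (N, E, lab) \<Rightarrow>
     {BFin (map lab p) | p. p \<noteq> [] \<and> hd p = n \<and> set p \<subseteq> N \<and>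
        (\<forall>i < length p - 1. (p ! i, p ! Suc i) \<in> E) \<and> \<not> (\<exists>m \<in> N. (last p, m) \<in> E)}
   \<union> {BInf (smap lab p) | p. shd p = n \<and> (\<forall>i. p !! i \<in> N \<and> (p !! i, p !! Suc i) \<in> E)})"

definition val :: "('n, 'f) lgraph \<Rightarrow> 'n \<Rightarrow> ('f branch \<Rightarrow> 'f) \<Rightarrow> ('f \<Rightarrow> tv) \<Rightarrow> tv" where
  "val J n B I = tv_Inf ((\<lambda>b. I (B b)) ` BJ J n)"

datatype 'f state = Fact 'f | Rule 'f "'f set"
datatype player = PlT | PlF

fun owner :: "'f state \<Rightarrow> player" where
  "owner (Fact _) = PlT" | "owner (Rule _ _) = PlF"

fun is_fact :: "'f state \<Rightarrow> bool" where
  "is_fact (Fact _) = True" | "is_fact (Rule _ _) = False"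

fun fact_of :: "'f state \<Rightarrow> 'f" where
  "fact_of (Fact y) = y" | "fact_of (Rule y _) = y"

fun gedge :: "('f \<times> 'f set) set \<Rightarrow> 'f state \<Rightarrow> 'f state \<Rightarrow> bool" where
  "gedge R (Fact y) (Rule y' A) \<longleftrightarrow> y' = y \<and> (y, A) \<in> R"
| "gedge R (Rule y A) (Fact z) \<longleftrightarrow> (y, A) \<in> R \<and> z \<in> A"
| "gedge R _ _ \<longleftrightarrow> False"

definition is_state :: "('f \<times> 'f set) set \<Rightarrow> 'f state \<Rightarrow> bool" where
  "is_state R s \<longleftrightarrow> (case s of Fact _ \<Rightarrow> True | Rule y A \<Rightarrow> (y, A) \<in> R)"

definition has_succ :: "('f \<times> 'f set) set \<Rightarrow> 'f state \<Rightarrow> bool" where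
  "has_succ R s \<longleftrightarrow> (\<exists>s'. gedge R s s')"

definition is_fin_path :: "('f \<times> 'f set) set \<Rightarrow> 'f state list \<Rightarrow> bool" where
  "is_fin_path R p \<longleftrightarrow> p \<noteq> [] \<and> is_state R (hd p) \<and>
     (\<forall>i < length p - 1. gedge R (p ! i) (p ! Suc i))"

text \<open>A strategy is represented by the successor state it chooses (equivalently,
  the outgoing edge to that state).\<close>
definition gen_strategies :: "('f \<times> 'f set) set \<Rightarrow> player \<Rightarrow> ('f state list \<Rightarrow> 'f state) set" where
  "gen_strategies R P = {\<rho>. \<forall>p. is_fin_path R p \<and> owner (last p) = P \<and> has_succ R (last p)
       \<longrightarrow> gedge R (last p) (\<rho> p)}"

definition positional_strategy :: "('f \<times> 'f set) set \<Rightarrow> player \<Rightarrow> ('f state \<Rightarrow> 'f state) \<Rightarrow> bool" where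
  "positional_strategy R P g \<longleftrightarrow> (\<forall>s. is_state R s \<and> owner s = P \<and> has_succ R s \<longrightarrow> gedge R s (g s))"

definition cons_fin :: "player \<Rightarrow> ('f state list \<Rightarrow> 'f state) \<Rightarrow> 'f state list \<Rightarrow> bool" where
  "cons_fin P \<rho> p \<longleftrightarrow> (\<forall>i < length p - 1. owner (p ! i) = P \<longrightarrow> \<rho> (take (Suc i) p) = p ! Suc i)"

definition cons_inf :: "player \<Rightarrow> ('f state list \<Rightarrow> 'f state) \<Rightarrow> 'f state stream \<Rightarrow> bool" where
  "cons_inf P \<rho> p \<longleftrightarrow> (\<forall>i. owner (p !! i) = P \<longrightarrow> \<rho> (stake (Suc i) p) = p !! Suc i)"

definition play :: "('f \<times> 'f set) set \<Rightarrow> 'f state \<Rightarrow> ('f state list \<Rightarrow> 'f state)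
    \<Rightarrow> ('f state list \<Rightarrow> 'f state) \<Rightarrow> 'f state branch" where
  "play R s \<sigma> \<tau> = (THE q.
      (case q of
         BFin p \<Rightarrow> is_fin_path R p \<and> hd p = s \<and> \<not> has_succ R (last p) \<and> cons_fin PlT \<sigma> p \<and> cons_fin PlF \<tau> p
       | BInf p \<Rightarrow> is_state R (shd p) \<and> shd p = s \<and> (\<forall>i. gedge R (p !! i) (p !! Suc i)) \<and>
                   cons_inf PlT \<sigma> p \<and> cons_inf PlF \<tau> p))"

fun del_rules :: "'f state branch \<Rightarrow> 'f branch" where
  "del_rules (BFin p) = BFin (map fact_of (filter is_fact p))"
| "del_rules (BInf p) = BInf (smap fact_of (sfilter is_fact p))"

definition u :: "('f \<times> 'f set) set \<Rightarrow> ('f branch \<Rightarrow> 'f) \<Rightarrow> ('f \<Rightarrow> tv) \<Rightarrow> 'f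
    \<Rightarrow> ('f state list \<Rightarrow> 'f state) \<Rightarrow> ('f state list \<Rightarrow> 'f state) \<Rightarrow> tv" where
  "u R B I x \<sigma> \<tau> = I (B (del_rules (play R (Fact x) \<sigma> \<tau>)))"

definition pos_to_gen :: "('f state \<Rightarrow> 'f state) \<Rightarrow> ('f state list \<Rightarrow> 'f state)" where
  "pos_to_gen g = (\<lambda>p. g (last p))"

text \<open>Finite paths from x consistent with \<rho> (every state/edge on an infinite consistent
  path already lies on a finite consistent prefix).\<close>
definition cons_paths_from :: "('f \<times> 'f set) set \<Rightarrow> player \<Rightarrow> ('f state list \<Rightarrow> 'f state)
    \<Rightarrow> 'f \<Rightarrow> 'f state list set" where
  "cons_paths_from R P \<rho> x = {p. is_fin_path R p \<and> hd p = Fact x \<and> cons_fin P \<rho> p}"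

definition play_graph :: "('f \<times> 'f set) set \<Rightarrow> player \<Rightarrow> ('f state \<Rightarrow> 'f state) \<Rightarrow> 'f
    \<Rightarrow> ('f state, 'f state) lgraph" where
  "play_graph R P g x =
     ({s. \<exists>p \<in> cons_paths_from R P (pos_to_gen g) x. s \<in> set p},
      {(s, s'). \<exists>p \<in> cons_paths_from R P (pos_to_gen g) x. \<exists>i < length p - 1. p ! i = s \<and> p ! Suc i = s'},
      id)"

definition play_tree :: "('f \<times> 'f set) set \<Rightarrow> player \<Rightarrow> ('f state list \<Rightarrow> 'f state) \<Rightarrow> 'f
    \<Rightarrow> ('f state list, 'f state) lgraph" where
  "play_tree R P \<rho> x =
     (cons_paths_from R P \<rho> x,
      {(p, p @ [s]) | p s. p \<in> cons_paths_from R P \<rho> x \<and> p @ [s] \<in> cons_paths_from R P \<rho> x},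
      last)"

definition filter_rules :: "('n, 'f state) lgraph \<Rightarrow> ('n, 'f state) lgraph" where
  "filter_rules J = (case J of (N, E, lab) \<Rightarrow>
     (let N' = {n \<in> N. is_fact (lab n)} in
      (N', {(n, m). n \<in> N' \<and> m \<in> N' \<and>
              ((n, m) \<in> E \<or> (\<exists>k \<in> N. \<not> is_fact (lab k) \<and> (n, k) \<in> E \<and> (k, m) \<in> E))},
       lab)))"

definition neg_labels :: "('f \<Rightarrow> 'f) \<Rightarrow> ('n, 'f state) lgraph \<Rightarrow> ('n, 'f) lgraph" where
  "neg_labels neg J = (case J of (N, E, lab) \<Rightarrow> (N, E, \<lambda>n. neg (fact_of (lab n))))"

definition J_pos :: "('f \<Rightarrow> 'f) \<Rightarrow> ('f \<times> 'f set) set \<Rightarrow> ('f state \<Rightarrow> 'f state) \<Rightarrow> 'f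
    \<Rightarrow> ('f state, 'f) lgraph" where
  "J_pos neg R g x = neg_labels neg (filter_rules (play_graph R PlF g x))"

definition J_gen :: "('f \<Rightarrow> 'f) \<Rightarrow> ('f \<times> 'f set) set \<Rightarrow> ('f state list \<Rightarrow> 'f state) \<Rightarrow> 'f
    \<Rightarrow> ('f state list, 'f) lgraph" where
  "J_gen neg R \<tau> x = neg_labels neg (filter_rules (play_tree R PlF \<tau> x))"

end

theory Submission
  imports Defs
begin

lemma tv_Inf_image_tv_neg: "tv_Inf (tv_neg ` S) = tv_neg (tv_Sup S)"
proof -
  have "tv_neg t = FF \<longleftrightarrow> t = TT" "tv_neg t = UU \<longleftrightarrow> t = UU" for t
    by (cases t; simp)+
  then have "FF \<in> tv_neg ` S \<longleftrightarrow> TT \<in> S" "UU \<in> tv_neg ` S \<longleftrightarrow> UU \<in> S"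
    unfolding image_iff by (metis, metis)
  then show ?thesis
    unfolding tv_Inf_def tv_Sup_def by simp
qed

lemma stream_eqI: "(\<And>n. s !! n = s' !! n) \<Longrightarrow> s = s'"
  by (metis stream_smap_nats ext)

lemma bmap_bmap: "bmap f (bmap g b) = bmap (f \<circ> g) b"
  by (cases b) (simp_all add: stream.map_comp)

lemma gedge_alternates: "gedge R s s' \<Longrightarrow> is_fact s' \<longleftrightarrow> \<not> is_fact s"
  by (cases s; cases s') auto

lemma gedge_is_state: "gedge R s s' \<Longrightarrow> is_state R s'"
  by (cases s; cases s') (auto simp: is_state_def)

lemma gedge_Fact_iff: "gedge R (Fact y) s \<longleftrightarrow> (\<exists>A. s = Rule y A \<and> (y, A) \<in> R)"
  by (cases s) auto

lemma owner_eq_PlT_iff: "owner s = PlT \<longleftrightarrow> is_fact s"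
  by (cases s) auto

lemma owner_eq_PlF_iff: "owner s = PlF \<longleftrightarrow> \<not> is_fact s"
  by (cases s) auto

lemma is_fact_iff: "is_fact s \<longleftrightarrow> s = Fact (fact_of s)"
  by (cases s) auto

context
  fixes neg lit Fd R
  assumes frame: "just_frame neg lit Fd R"
begin

lemma has_succ_Fact_iff: "has_succ R (Fact y) \<longleftrightarrow> y \<in> Fd"
proof
  assume "has_succ R (Fact y)"
  then obtain A where "(y, A) \<in> R"
    unfolding has_succ_def gedge_Fact_iff by blast
  then show "y \<in> Fd"
    using frame unfolding just_frame_def by auto
next
  assume "y \<in> Fd"
  then obtain A where "(y, A) \<in> R"
    using frame unfolding just_frame_def by blast
  then show "has_succ R (Fact y)"
    unfolding has_succ_def gedge_Fact_iff by blast
qed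

lemma has_succ_Rule: "(y, A) \<in> R \<Longrightarrow> has_succ R (Rule y A)"
proof -
  assume yA: "(y, A) \<in> R"
  then obtain z where "z \<in> A"
    using frame unfolding just_frame_def by fastforce
  with yA show ?thesis
    unfolding has_succ_def by (metis gedge.simps(2))
qed

lemma has_succ_if_not_fact: "is_state R s \<Longrightarrow> \<not> is_fact s \<Longrightarrow> has_succ R s"
  by (cases s) (simp_all add: is_state_def has_succ_Rule)

end

lemma is_fin_path_snoc:
  assumes "p \<noteq> []"
  shows "is_fin_path R (p @ [s]) \<longleftrightarrow> is_fin_path R p \<and> gedge R (last p) s"
proof -
  obtain n where n: "length p = Suc n"
    using assms by (cases p) auto
  have old: "(p @ [s]) ! i = p ! i" "(p @ [s]) ! Suc i = p ! Suc i" if "i < n" for i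
    using that n by (simp_all add: nth_append)
  have new: "(p @ [s]) ! n = last p" "(p @ [s]) ! Suc n = s"
    using assms n by (simp_all add: nth_append last_conv_nth)
  have "is_fin_path R (p @ [s]) \<longleftrightarrow>
      is_state R (hd p) \<and> (\<forall>i < Suc n. gedge R ((p @ [s]) ! i) ((p @ [s]) ! Suc i))"
    unfolding is_fin_path_def using assms n by simp
  also have "\<dots> \<longleftrightarrow> is_state R (hd p) \<and> (\<forall>i < n. gedge R ((p @ [s]) ! i) ((p @ [s]) ! Suc i)) \<and>
      gedge R ((p @ [s]) ! n) ((p @ [s]) ! Suc n)"
    by (simp add: less_Suc_eq all_conj_distrib conj_commute)
  also have "\<dots> \<longleftrightarrow> is_fin_path R p \<and> gedge R (last p) s"
    unfolding is_fin_path_def new using assms n old by auto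
  finally show ?thesis .
qed

lemma cons_fin_snoc:
  assumes "p \<noteq> []"
  shows "cons_fin P \<rho> (p @ [s]) \<longleftrightarrow> cons_fin P \<rho> p \<and> (owner (last p) = P \<longrightarrow> \<rho> p = s)"
proof -
  obtain n where n: "length p = Suc n"
    using assms by (cases p) auto
  have old: "(p @ [s]) ! i = p ! i" "(p @ [s]) ! Suc i = p ! Suc i"
    "take (Suc i) (p @ [s]) = take (Suc i) p" if "i < n" for i
    using that n by (simp_all add: nth_append)
  have new: "(p @ [s]) ! n = last p" "(p @ [s]) ! Suc n = s" "take (Suc n) (p @ [s]) = p"
    using assms n by (simp_all add: nth_append last_conv_nth)
  have "cons_fin P \<rho> (p @ [s]) \<longleftrightarrow> (\<forall>i < Suc n. owner ((p @ [s]) ! i) = P \<longrightarrow>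
      \<rho> (take (Suc i) (p @ [s])) = (p @ [s]) ! Suc i)"
    unfolding cons_fin_def using n by simp
  also have "\<dots> \<longleftrightarrow> (\<forall>i < n. owner ((p @ [s]) ! i) = P \<longrightarrow>
        \<rho> (take (Suc i) (p @ [s])) = (p @ [s]) ! Suc i) \<and>
      (owner ((p @ [s]) ! n) = P \<longrightarrow> \<rho> (take (Suc n) (p @ [s])) = (p @ [s]) ! Suc n)"
    by (simp add: less_Suc_eq all_conj_distrib conj_commute)
  also have "\<dots> \<longleftrightarrow> cons_fin P \<rho> p \<and> (owner (last p) = P \<longrightarrow> \<rho> p = s)"
    unfolding cons_fin_def new using n old by auto
  finally show ?thesis .
qed

lemma is_fin_path_take:
  assumes "is_fin_path R p" "0 < k"
  shows "is_fin_path R (take k p)"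
  using assms unfolding is_fin_path_def by (simp add: hd_take)

lemma cons_fin_take: "cons_fin P \<rho> p \<Longrightarrow> cons_fin P \<rho> (take k p)"
  unfolding cons_fin_def
proof (intro allI impI)
  fix i
  assume "\<forall>i < length p - 1. owner (p ! i) = P \<longrightarrow> \<rho> (take (Suc i) p) = p ! Suc i"
    and "i < length (take k p) - 1" "owner (take k p ! i) = P"
  moreover have "Suc i < k"
    using \<open>i < length (take k p) - 1\<close> by simp
  then have "take (Suc i) (take k p) = take (Suc i) p"
    by (simp add: min_def)
  ultimately show "\<rho> (take (Suc i) (take k p)) = take k p ! Suc i"
    by simp
qed

lemma is_fin_path_nth_is_state:
  assumes "is_fin_path R p" "i < length p"
  shows "is_state R (p ! i)"
proof (cases i)
  case 0
  then show ?thesis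
    using assms unfolding is_fin_path_def by (metis hd_conv_nth)
next
  case (Suc j)
  then have "gedge R (p ! j) (p ! i)"
    using assms unfolding is_fin_path_def by auto
  then show ?thesis
    by (rule gedge_is_state)
qed

lemma fin_path_is_fact_nth_iff:
  assumes "is_fin_path R p" "hd p = Fact x" "i < length p"
  shows "is_fact (p ! i) \<longleftrightarrow> even i"
  using assms(3)
proof (induction i)
  case 0
  then show ?case
    using assms by (simp add: hd_conv_nth)
next
  case (Suc i)
  then have "gedge R (p ! i) (p ! Suc i)"
    using assms unfolding is_fin_path_def by auto
  then show ?case
    using Suc gedge_alternates by force
qed

lemma inf_path_is_fact_nth_iff:
  assumes "shd q = Fact x" "\<forall>i. gedge R (q !! i) (q !! Suc i)"
  shows "is_fact (q !! i) \<longleftrightarrow> even i"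
  by (induction i) (use assms gedge_alternates in force)+

lemma last_take_Suc: "i < length p \<Longrightarrow> last (take (Suc i) p) = p ! i"
  by (simp add: take_Suc_conv_app_nth)

lemma last_stake_Suc: "last (stake (Suc n) q) = q !! n"
  by (metis last_snoc stake_Suc)

lemma stake_Suc_Suc: "stake (Suc (Suc n)) q = stake n q @ [q !! n, q !! Suc n]"
  by (simp only: stake_Suc) simp

lemma take_two_more: "j + 2 < length q \<Longrightarrow> take (j + 3) q = take (j + 1) q @ [q ! (j + 1), q ! (j + 2)]"
  by (simp add: take_Suc_conv_app_nth numeral_3_eq_3)

section \<open>Plays\<close>

definition next_state :: "('f state list \<Rightarrow> 'f state) \<Rightarrow> ('f state list \<Rightarrow> 'f state)
    \<Rightarrow> 'f state list \<Rightarrow> 'f state" where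
  "next_state \<sigma> \<tau> p = (if owner (last p) = PlT then \<sigma> p else \<tau> p)"

primrec play_prefix :: "('f state list \<Rightarrow> 'f state) \<Rightarrow> ('f state list \<Rightarrow> 'f state)
    \<Rightarrow> 'f state \<Rightarrow> nat \<Rightarrow> 'f state list" where
  "play_prefix \<sigma> \<tau> s 0 = [s]"
| "play_prefix \<sigma> \<tau> s (Suc n) = play_prefix \<sigma> \<tau> s n @ [next_state \<sigma> \<tau> (play_prefix \<sigma> \<tau> s n)]"

lemma length_play_prefix [simp]: "length (play_prefix \<sigma> \<tau> s n) = Suc n"
  by (induction n) simp_all

lemma play_prefix_not_Nil [simp]: "play_prefix \<sigma> \<tau> s n \<noteq> []"
  by (cases n) simp_all

lemma hd_play_prefix [simp]: "hd (play_prefix \<sigma> \<tau> s n) = s"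
  by (induction n) simp_all

lemma take_play_prefix: "i \<le> n \<Longrightarrow> take (Suc i) (play_prefix \<sigma> \<tau> s n) = play_prefix \<sigma> \<tau> s i"
  by (induction n) (auto simp: le_Suc_eq)

lemma cons_fin_play_prefix:
  "cons_fin PlT \<sigma> (play_prefix \<sigma> \<tau> s n) \<and> cons_fin PlF \<tau> (play_prefix \<sigma> \<tau> s n)"
proof (induction n)
  case 0
  then show ?case
    unfolding cons_fin_def by simp
next
  case (Suc n)
  then show ?case
    unfolding play_prefix.simps cons_fin_snoc[OF play_prefix_not_Nil] next_state_def by auto
qed

lemma gedge_next_state:
  assumes "\<sigma> \<in> gen_strategies R PlT" "\<tau> \<in> gen_strategies R PlF"
    and "is_fin_path R p" "has_succ R (last p)"
  shows "gedge R (last p) (next_state \<sigma> \<tau> p)"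
  using assms unfolding gen_strategies_def next_state_def by (cases "last p") auto

lemma is_fin_path_play_prefix:
  assumes "\<sigma> \<in> gen_strategies R PlT" "\<tau> \<in> gen_strategies R PlF" "is_state R s"
    and "\<forall>k < n. has_succ R (last (play_prefix \<sigma> \<tau> s k))"
  shows "is_fin_path R (play_prefix \<sigma> \<tau> s n)"
  using assms(4)
proof (induction n)
  case 0
  then show ?case
    using assms(3) unfolding is_fin_path_def by simp
next
  case (Suc n)
  then show ?case
    unfolding play_prefix.simps is_fin_path_snoc[OF play_prefix_not_Nil]
    using gedge_next_state[OF assms(1,2)] by simp
qed

lemma next_state_eqI:
  assumes "owner (last p) = PlT \<Longrightarrow> \<sigma> p = s" "owner (last p) = PlF \<Longrightarrow> \<tau> p = s"
  shows "next_state \<sigma> \<tau> p = s"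
  using assms unfolding next_state_def by (cases "owner (last p)") auto

lemma take_consistent_fin_path:
  assumes "hd p = s" "cons_fin PlT \<sigma> p" "cons_fin PlF \<tau> p" "i < length p"
  shows "take (Suc i) p = play_prefix \<sigma> \<tau> s i"
  using assms(4)
proof (induction i)
  case 0
  then show ?case
    using assms(1) by (cases p) auto
next
  case (Suc i)
  have "next_state \<sigma> \<tau> (take (Suc i) p) = p ! Suc i"
    using assms(2,3) Suc.prems
    by (intro next_state_eqI) (auto simp: cons_fin_def last_take_Suc)
  then show ?case
    using Suc by (simp add: take_Suc_conv_app_nth)
qed

lemma stake_consistent_stream:
  assumes "shd q = s" "cons_inf PlT \<sigma> q" "cons_inf PlF \<tau> q"
  shows "stake (Suc i) q = play_prefix \<sigma> \<tau> s i"
proof (induction i)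
  case 0
  then show ?case
    using assms(1) by simp
next
  case (Suc i)
  have "next_state \<sigma> \<tau> (stake (Suc i) q) = q !! Suc i"
    using assms(2,3)
    unfolding cons_inf_def by (intro next_state_eqI) (simp_all add: last_stake_Suc del: stake.simps)
  then show ?case
    using Suc by (metis stake_Suc play_prefix.simps(2))
qed

definition is_play :: "('f \<times> 'f set) set \<Rightarrow> 'f state \<Rightarrow> ('f state list \<Rightarrow> 'f state)
    \<Rightarrow> ('f state list \<Rightarrow> 'f state) \<Rightarrow> 'f state branch \<Rightarrow> bool" where
  "is_play R s \<sigma> \<tau> q = (case q of
       BFin p \<Rightarrow> is_fin_path R p \<and> hd p = s \<and> \<not> has_succ R (last p) \<and>
         cons_fin PlT \<sigma> p \<and> cons_fin PlF \<tau> p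
     | BInf p \<Rightarrow> is_state R (shd p) \<and> shd p = s \<and> (\<forall>i. gedge R (p !! i) (p !! Suc i)) \<and>
         cons_inf PlT \<sigma> p \<and> cons_inf PlF \<tau> p)"

lemma play_eq_The_is_play: "play R s \<sigma> \<tau> = (THE q. is_play R s \<sigma> \<tau> q)"
  unfolding play_def is_play_def ..

lemma is_play_BFin:
  assumes "is_play R s \<sigma> \<tau> (BFin p)"
  shows "p = play_prefix \<sigma> \<tau> s (length p - 1)"
    and "\<not> has_succ R (last (play_prefix \<sigma> \<tau> s (length p - 1)))"
    and "k < length p - 1 \<Longrightarrow> has_succ R (last (play_prefix \<sigma> \<tau> s k))"
proof -
  have p: "is_fin_path R p" "hd p = s" "\<not> has_succ R (last p)" "cons_fin PlT \<sigma> p" "cons_fin PlF \<tau> p"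
    using assms unfolding is_play_def by simp_all
  then have "p \<noteq> []"
    unfolding is_fin_path_def by simp
  have prefix: "take (Suc k) p = play_prefix \<sigma> \<tau> s k" if "k < length p" for k
    using take_consistent_fin_path[OF p(2,4,5) that] .
  show whole: "p = play_prefix \<sigma> \<tau> s (length p - 1)"
    using prefix[of "length p - 1"] \<open>p \<noteq> []\<close> by simp
  show "\<not> has_succ R (last (play_prefix \<sigma> \<tau> s (length p - 1)))"
    using p(3) whole by simp
  assume "k < length p - 1"
  then have "gedge R (p ! k) (p ! Suc k)" and "last (play_prefix \<sigma> \<tau> s k) = p ! k"
    using p(1) prefix[of k] last_take_Suc[of k p] unfolding is_fin_path_def by auto
  then show "has_succ R (last (play_prefix \<sigma> \<tau> s k))"
    unfolding has_succ_def by auto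
qed

lemma is_play_BInf:
  assumes "is_play R s \<sigma> \<tau> (BInf q)"
  shows "q !! n = last (play_prefix \<sigma> \<tau> s n)"
    and "has_succ R (last (play_prefix \<sigma> \<tau> s n))"
proof -
  have q: "shd q = s" "\<forall>i. gedge R (q !! i) (q !! Suc i)" "cons_inf PlT \<sigma> q" "cons_inf PlF \<tau> q"
    using assms unfolding is_play_def by simp_all
  show nth: "q !! n = last (play_prefix \<sigma> \<tau> s n)"
    using stake_consistent_stream[OF q(1,3,4), of n] last_stake_Suc[of n q] by simp
  show "has_succ R (last (play_prefix \<sigma> \<tau> s n))"
    using q(2) unfolding nth[symmetric] has_succ_def by blast
qed

lemma is_play_unique:
  assumes "is_play R s \<sigma> \<tau> q" "is_play R s \<sigma> \<tau> q'"
  shows "q = q'"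
proof (cases q; cases q')
  fix p p'
  assume q: "q = BFin p" and q': "q' = BFin p'"
  have "length p - 1 = length p' - 1"
    using is_play_BFin(2,3)[OF assms(1)[unfolded q]] is_play_BFin(2,3)[OF assms(2)[unfolded q']]
    by (metis linorder_neqE_nat)
  then show "q = q'"
    using is_play_BFin(1)[OF assms(1)[unfolded q]] is_play_BFin(1)[OF assms(2)[unfolded q']] q q'
    by metis
next
  fix p p'
  assume "q = BFin p" "q' = BInf p'"
  then show "q = q'"
    using is_play_BFin(2)[of R s \<sigma> \<tau> p] is_play_BInf(2)[of R s \<sigma> \<tau> p'] assms by blast
next
  fix p p'
  assume "q = BInf p" "q' = BFin p'"
  then show "q = q'"
    using is_play_BFin(2)[of R s \<sigma> \<tau> p'] is_play_BInf(2)[of R s \<sigma> \<tau> p] assms by blast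
next
  fix p p'
  assume q: "q = BInf p" and q': "q' = BInf p'"
  then have "p = p'"
    using is_play_BInf(1)[of R s \<sigma> \<tau>] assms by (metis stream_eqI)
  then show "q = q'"
    using q q' by simp
qed

lemma is_play_exists:
  assumes "\<sigma> \<in> gen_strategies R PlT" "\<tau> \<in> gen_strategies R PlF" "is_state R s"
  shows "\<exists>q. is_play R s \<sigma> \<tau> q"
proof (cases "\<exists>n. \<not> has_succ R (last (play_prefix \<sigma> \<tau> s n))")
  case True
  define n where "n = (LEAST n. \<not> has_succ R (last (play_prefix \<sigma> \<tau> s n)))"
  have "\<not> has_succ R (last (play_prefix \<sigma> \<tau> s n))"
    unfolding n_def using True by (rule LeastI_ex)
  moreover have "\<forall>k < n. has_succ R (last (play_prefix \<sigma> \<tau> s k))"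
    unfolding n_def using not_less_Least by blast
  ultimately have "is_play R s \<sigma> \<tau> (BFin (play_prefix \<sigma> \<tau> s n))"
    unfolding is_play_def using is_fin_path_play_prefix[OF assms] cons_fin_play_prefix by simp
  then show ?thesis ..
next
  case False
  define S where "S = smap (\<lambda>n. last (play_prefix \<sigma> \<tau> s n)) nats"
  have S_nth: "S !! n = last (play_prefix \<sigma> \<tau> s n)" for n
    unfolding S_def by simp
  have S_stake: "stake (Suc n) S = play_prefix \<sigma> \<tau> s n" for n
  proof (induction n)
    case 0
    then show ?case
      using S_nth[of 0] by simp
  next
    case (Suc n)
    then show ?case
      using stake_Suc[of "Suc n" S] S_nth[of "Suc n"] by simp
  qed
  have S_Suc: "S !! Suc n = next_state \<sigma> \<tau> (stake (Suc n) S)" for n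
    unfolding S_stake S_nth by simp
  have "gedge R (S !! n) (S !! Suc n)" for n
    unfolding S_Suc S_stake S_nth
    using False gedge_next_state[OF assms(1,2) is_fin_path_play_prefix[OF assms]] by auto
  moreover have "cons_inf PlT \<sigma> S" "cons_inf PlF \<tau> S"
    unfolding cons_inf_def S_Suc next_state_def last_stake_Suc by auto
  ultimately have "is_play R s \<sigma> \<tau> (BInf S)"
    unfolding is_play_def using assms(3) S_nth[of 0] by simp
  then show ?thesis ..
qed

lemma play_is_play:
  assumes "\<sigma> \<in> gen_strategies R PlT" "\<tau> \<in> gen_strategies R PlF" "is_state R s"
  shows "is_play R s \<sigma> \<tau> (play R s \<sigma> \<tau>)"
  using is_play_exists[OF assms] is_play_unique unfolding play_eq_The_is_play by (metis theI)

lemma strategy_following: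
  assumes "\<And>p. P p \<Longrightarrow> gedge R (last p) (f p)"
  shows "(\<lambda>p. if P p then f p else SOME s. gedge R (last p) s) \<in> gen_strategies R Q"
  using assms unfolding gen_strategies_def has_succ_def by (auto intro: someI_ex)

lemma fin_path_consistent_strategy:
  assumes "is_fin_path R q"
  shows "\<exists>\<rho> \<in> gen_strategies R P. cons_fin P \<rho> q"
proof
  let ?follows = "\<lambda>p. p \<noteq> [] \<and> length p < length q \<and> take (length p) q = p"
  show "(\<lambda>p. if ?follows p then q ! length p else SOME s. gedge R (last p) s) \<in> gen_strategies R P"
  proof (rule strategy_following)
    fix p
    assume "?follows p"
    then have "0 < length p" "length p < length q" and prefix: "take (length p) q = p"
      by auto
    then have p: "Suc (length p - 1) = length p" "length p - 1 < length q - 1"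
      by linarith+
    then have "last p = q ! (length p - 1)"
      using last_take_Suc[of "length p - 1" q] prefix by simp
    moreover have "gedge R (q ! (length p - 1)) (q ! Suc (length p - 1))"
      using assms p(2) unfolding is_fin_path_def by blast
    ultimately show "gedge R (last p) (q ! length p)"
      using p(1) by simp
  qed
  show "cons_fin P (\<lambda>p. if ?follows p then q ! length p else SOME s. gedge R (last p) s) q"
    unfolding cons_fin_def by auto
qed

lemma inf_path_consistent_strategy:
  assumes "\<forall>i. gedge R (q !! i) (q !! Suc i)"
  shows "\<exists>\<rho> \<in> gen_strategies R P. cons_inf P \<rho> q"
proof
  let ?follows = "\<lambda>p. p \<noteq> [] \<and> stake (length p) q = p"
  show "(\<lambda>p. if ?follows p then q !! length p else SOME s. gedge R (last p) s) \<in> gen_strategies R P"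
  proof (rule strategy_following)
    fix p
    assume p: "?follows p"
    then have len: "Suc (length p - 1) = length p"
      by simp
    then have "last p = q !! (length p - 1)"
      using p last_stake_Suc[of "length p - 1" q] by simp
    moreover have "gedge R (q !! (length p - 1)) (q !! Suc (length p - 1))"
      using assms by blast
    ultimately show "gedge R (last p) (q !! length p)"
      by (simp only: len)
  qed
  show "cons_inf P (\<lambda>p. if ?follows p then q !! length p else SOME s. gedge R (last p) s) q"
    unfolding cons_inf_def by (simp del: stake.simps)
qed

definition max_paths :: "('f \<times> 'f set) set \<Rightarrow> ('f state list \<Rightarrow> 'f state) \<Rightarrow> 'f
    \<Rightarrow> 'f state branch set" where
  "max_paths R \<tau> x =
     {BFin q | q. is_fin_path R q \<and> hd q = Fact x \<and> \<not> has_succ R (last q) \<and> cons_fin PlF \<tau> q}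
   \<union> {BInf q | q. shd q = Fact x \<and> (\<forall>i. gedge R (q !! i) (q !! Suc i)) \<and> cons_inf PlF \<tau> q}"

lemma BFin_in_max_paths_iff:
  "BFin q \<in> max_paths R \<tau> x \<longleftrightarrow>
     is_fin_path R q \<and> hd q = Fact x \<and> \<not> has_succ R (last q) \<and> cons_fin PlF \<tau> q"
  unfolding max_paths_def by blast

lemma BInf_in_max_paths_iff:
  "BInf q \<in> max_paths R \<tau> x \<longleftrightarrow>
     shd q = Fact x \<and> (\<forall>i. gedge R (q !! i) (q !! Suc i)) \<and> cons_inf PlF \<tau> q"
  unfolding max_paths_def by blast

lemma is_play_Fact_iff:
  "is_play R (Fact x) \<sigma> \<tau> q \<longleftrightarrow> q \<in> max_paths R \<tau> x \<and>
     (case q of BFin p \<Rightarrow> cons_fin PlT \<sigma> p | BInf p \<Rightarrow> cons_inf PlT \<sigma> p)"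
  by (cases q) (auto simp: is_play_def BFin_in_max_paths_iff BInf_in_max_paths_iff is_state_def)

lemma plays_eq_max_paths:
  assumes \<tau>: "\<tau> \<in> gen_strategies R PlF"
  shows "(\<lambda>\<sigma>. play R (Fact x) \<sigma> \<tau>) ` gen_strategies R PlT = max_paths R \<tau> x"
proof (intro equalityI subsetI)
  fix b
  assume "b \<in> (\<lambda>\<sigma>. play R (Fact x) \<sigma> \<tau>) ` gen_strategies R PlT"
  then obtain \<sigma> where "\<sigma> \<in> gen_strategies R PlT" "b = play R (Fact x) \<sigma> \<tau>"
    by blast
  then have "is_play R (Fact x) \<sigma> \<tau> b"
    using play_is_play[OF _ \<tau>] by (simp add: is_state_def)
  then show "b \<in> max_paths R \<tau> x"
    by (simp add: is_play_Fact_iff)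
next
  fix b
  assume b: "b \<in> max_paths R \<tau> x"
  have "\<exists>\<sigma> \<in> gen_strategies R PlT. case b of BFin p \<Rightarrow> cons_fin PlT \<sigma> p | BInf p \<Rightarrow> cons_inf PlT \<sigma> p"
  proof (cases b)
    case (BFin p)
    with b have "is_fin_path R p"
      by (simp add: BFin_in_max_paths_iff)
    with BFin show ?thesis
      using fin_path_consistent_strategy by simp
  next
    case (BInf p)
    with b have "\<forall>i. gedge R (p !! i) (p !! Suc i)"
      by (simp add: BInf_in_max_paths_iff)
    with BInf show ?thesis
      using inf_path_consistent_strategy by simp
  qed
  then obtain \<sigma> where \<sigma>: "\<sigma> \<in> gen_strategies R PlT"
    and "case b of BFin p \<Rightarrow> cons_fin PlT \<sigma> p | BInf p \<Rightarrow> cons_inf PlT \<sigma> p"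
    by blast
  with b have "is_play R (Fact x) \<sigma> \<tau> b"
    by (simp add: is_play_Fact_iff)
  then have "play R (Fact x) \<sigma> \<tau> = b"
    using is_play_unique play_is_play[OF \<sigma> \<tau>, of "Fact x"] by (simp add: is_state_def)
  with \<sigma> show "b \<in> (\<lambda>\<sigma>. play R (Fact x) \<sigma> \<tau>) ` gen_strategies R PlT"
    by blast
qed

section \<open>Deleting rule symbols\<close>

fun even_positions :: "'a branch \<Rightarrow> 'a branch" where
  "even_positions (BFin q) = BFin (map (\<lambda>i. q ! (2 * i)) [0..<Suc (length q div 2)])"
| "even_positions (BInf q) = BInf (smap (\<lambda>i. q !! (2 * i)) nats)"

lemma filter_alternating:
  "\<forall>j < length q. P (q ! j) \<longleftrightarrow> even j \<Longrightarrow>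
     filter P q = map (\<lambda>i. q ! (2 * i)) [0..<(length q + 1) div 2]"
proof (induction q rule: induct_list012)
  case (3 a b r)
  have "\<forall>j < length r. P (r ! j) \<longleftrightarrow> even j"
  proof (intro allI impI)
    fix j
    assume "j < length r"
    then show "P (r ! j) \<longleftrightarrow> even j"
      using "3.prems"[rule_format, of "Suc (Suc j)"] by simp
  qed
  moreover have "P a" "\<not> P b"
    using "3.prems"[rule_format, of 0] "3.prems"[rule_format, of 1] by simp_all
  ultimately show ?case
    using "3.IH"(1) by (simp add: map_upt_Suc del: upt_Suc)
qed auto

lemma sfilter_alternating_nth:
  "\<forall>j. P (q !! j) \<longleftrightarrow> even j \<Longrightarrow> sfilter P q !! n = q !! (2 * n)"
proof (induction n arbitrary: q)
  case n: 0
  obtain a r where "q = a ## r"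
    by (metis stream.collapse)
  then show ?case
    using n[rule_format, of 0] by (simp add: sfilter_Stream)
next
  case (Suc n)
  obtain a b r where q: "q = a ## b ## r"
    by (metis stream.collapse)
  have "\<forall>j. P (r !! j) \<longleftrightarrow> even j"
    using Suc.prems q by (metis snth_Stream even_Suc)
  moreover have "P a" "\<not> P b"
    using Suc.prems[rule_format, of 0] Suc.prems[rule_format, of 1] q by simp_all
  ultimately show ?case
    using Suc.IH q by (simp add: sfilter_Stream)
qed

lemma sfilter_alternating:
  "\<forall>j. P (q !! j) \<longleftrightarrow> even j \<Longrightarrow> sfilter P q = smap (\<lambda>i. q !! (2 * i)) nats"
  by (rule stream_eqI) (simp add: sfilter_alternating_nth)

context
  fixes neg lit Fd R
  assumes frame: "just_frame neg lit Fd R"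
begin

lemma max_path_odd_length:
  assumes "BFin q \<in> max_paths R \<tau> x"
  shows "odd (length q)"
proof -
  have q: "is_fin_path R q" "hd q = Fact x" "\<not> has_succ R (last q)"
    using assms by (simp_all add: BFin_in_max_paths_iff)
  then have "q \<noteq> []" and last: "last q = q ! (length q - 1)"
    unfolding is_fin_path_def by (simp_all add: last_conv_nth)
  then have "is_state R (last q)"
    using is_fin_path_nth_is_state[OF q(1), of "length q - 1"] by simp
  then have "is_fact (q ! (length q - 1))"
    using has_succ_if_not_fact[OF frame] q(3) last by metis
  then have "even (length q - 1)"
    using fin_path_is_fact_nth_iff[OF q(1,2), of "length q - 1"] \<open>q \<noteq> []\<close> by simp
  then show ?thesis
    using \<open>q \<noteq> []\<close> by (cases "length q") auto
qed

lemma del_rules_max_path: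
  assumes "b \<in> max_paths R \<tau> x"
  shows "del_rules b = bmap fact_of (even_positions b)"
proof (cases b)
  case (BFin q)
  with assms have "BFin q \<in> max_paths R \<tau> x"
    by simp
  then have q: "is_fin_path R q" "hd q = Fact x" "odd (length q)"
    using max_path_odd_length unfolding BFin_in_max_paths_iff by blast+
  then have "\<forall>j < length q. is_fact (q ! j) \<longleftrightarrow> even j"
    using fin_path_is_fact_nth_iff[OF q(1,2)] by blast
  then have "filter is_fact q = map (\<lambda>i. q ! (2 * i)) [0..<(length q + 1) div 2]"
    by (rule filter_alternating)
  moreover have "(length q + 1) div 2 = Suc (length q div 2)"
    using q(3) by presburger
  ultimately show ?thesis
    using BFin by simp
next
  case (BInf q)
  then have "shd q = Fact x" "\<forall>i. gedge R (q !! i) (q !! Suc i)"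
    using assms by (simp_all add: BInf_in_max_paths_iff)
  then have "\<forall>j. is_fact (q !! j) \<longleftrightarrow> even j"
    using inf_path_is_fact_nth_iff by metis
  then have "sfilter is_fact q = smap (\<lambda>i. q !! (2 * i)) nats"
    by (rule sfilter_alternating)
  then show ?thesis
    using BInf by simp
qed

lemma has_succ_fact_iff: "is_fact s \<Longrightarrow> has_succ R s \<longleftrightarrow> fact_of s \<in> Fd"
  using has_succ_Fact_iff[OF frame] by (metis is_fact_iff)

lemma is_branch_del_rules_max_path:
  assumes x: "x \<in> Fd" and b: "b \<in> max_paths R \<tau> x"
  shows "is_branch Fd (del_rules b)"
proof (cases b)
  case (BFin q)
  with b have "BFin q \<in> max_paths R \<tau> x"
    by simp
  then have q: "is_fin_path R q" "hd q = Fact x" "\<not> has_succ R (last q)" "odd (length q)"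
    using max_path_odd_length unfolding BFin_in_max_paths_iff by blast+
  define k where "k = length q div 2"
  have len: "length q = Suc (2 * k)"
    using q(4) unfolding k_def by presburger
  have fact: "is_fact (q ! (2 * i))" if "i \<le> k" for i
    using fin_path_is_fact_nth_iff[OF q(1,2)] that len by simp
  have "q \<noteq> []"
    using len by auto
  then have last: "last q = q ! (2 * k)"
    by (simp add: last_conv_nth len)
  have "k \<noteq> 0"
  proof
    assume "k = 0"
    then have "last q = Fact x"
      using q(2) last \<open>q \<noteq> []\<close> by (simp add: hd_conv_nth)
    then show False
      using q(3) x has_succ_Fact_iff[OF frame] by simp
  qed
  moreover have "fact_of (q ! (2 * i)) \<in> Fd" if "i < k" for i
  proof -
    have "gedge R (q ! (2 * i)) (q ! Suc (2 * i))"
      using q(1) that len unfolding is_fin_path_def by simp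
    then have "has_succ R (q ! (2 * i))"
      unfolding has_succ_def ..
    then show ?thesis
      using has_succ_fact_iff fact that by simp
  qed
  moreover have "fact_of (q ! (2 * k)) \<notin> Fd"
    using q(3) last has_succ_fact_iff fact by simp
  moreover have "del_rules b = BFin (map (\<lambda>i. fact_of (q ! (2 * i))) [0..<Suc k])"
    using del_rules_max_path[OF b] BFin k_def by simp
  ultimately show ?thesis
    unfolding is_branch_def by (simp add: last_map nth_append)
next
  case (BInf q)
  with b have q: "shd q = Fact x" "\<forall>i. gedge R (q !! i) (q !! Suc i)"
    by (simp_all add: BInf_in_max_paths_iff)
  have "fact_of (q !! (2 * i)) \<in> Fd" for i
  proof -
    have "has_succ R (q !! (2 * i))"
      using q(2) unfolding has_succ_def by blast
    then show ?thesis
      using has_succ_fact_iff inf_path_is_fact_nth_iff[OF q] by simp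
  qed
  moreover have "del_rules b = BInf (smap (\<lambda>i. fact_of (q !! (2 * i))) nats)"
    using del_rules_max_path[OF b] BInf by (simp add: stream.map_comp o_def)
  ultimately show ?thesis
    unfolding is_branch_def by simp
qed

lemma val_eq_tv_neg_Sup_u:
  assumes x: "x \<in> Fd" and B: "consistent_be neg Fd B" and I: "is_interp neg lit I"
    and \<tau>: "\<tau> \<in> gen_strategies R PlF"
    and BJ: "BJ J n = (\<lambda>b. bmap neg (del_rules b)) ` max_paths R \<tau> x"
  shows "val J n B I = tv_neg (tv_Sup {u R B I x \<sigma> \<tau> | \<sigma>. \<sigma> \<in> gen_strategies R PlT})"
proof -
  have payoffs: "{u R B I x \<sigma> \<tau> | \<sigma>. \<sigma> \<in> gen_strategies R PlT} =
      (\<lambda>b. I (B (del_rules b))) ` max_paths R \<tau> x"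
    unfolding u_def plays_eq_max_paths[OF \<tau>, symmetric] by blast
  have "I (B (bmap neg (del_rules b))) = tv_neg (I (B (del_rules b)))" if "b \<in> max_paths R \<tau> x" for b
    using is_branch_del_rules_max_path[OF x that] B I
    unfolding consistent_be_def is_interp_def by simp
  then have "(\<lambda>b. I (B b)) ` BJ J n = tv_neg ` (\<lambda>b. I (B (del_rules b))) ` max_paths R \<tau> x"
    unfolding BJ image_image by simp
  then show ?thesis
    unfolding val_def payoffs by (simp add: tv_Inf_image_tv_neg)
qed

end

lemma BJ_relabel: "BJ (N, E, \<lambda>n. f (lab n)) n = bmap f ` BJ (N, E, lab) n"
proof -
  have fin: "bmap f ` {BFin (map lab p) | p. P p} = {BFin (map f (map lab p)) | p. P p}" for P
    by (force simp del: map_map)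
  have inf: "bmap f ` {BInf (smap lab p) | p. P p} = {BInf (smap f (smap lab p)) | p. P p}" for P
    by (force simp del: stream.map_comp)
  show ?thesis
    unfolding BJ_def prod.case image_Un fin inf by (simp add: stream.map_comp o_def)
qed

lemma BFin_in_BJ:
  assumes "p \<noteq> []" "hd p = n" "set p \<subseteq> N" "\<forall>i < length p - 1. (p ! i, p ! Suc i) \<in> E"
    "\<not> (\<exists>m \<in> N. (last p, m) \<in> E)"
  shows "BFin (map lab p) \<in> BJ (N, E, lab) n"
  unfolding BJ_def using assms by blast

lemma BInf_in_BJ:
  assumes "shd p = n" "\<forall>i. p !! i \<in> N \<and> (p !! i, p !! Suc i) \<in> E"
  shows "BInf (smap lab p) \<in> BJ (N, E, lab) n"
  unfolding BJ_def using assms by blast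

lemma BJ_cases:
  assumes "b \<in> BJ (N, E, lab) n"
  obtains (fin) p where "b = BFin (map lab p)" "p \<noteq> []" "hd p = n" "set p \<subseteq> N"
    "\<forall>i < length p - 1. (p ! i, p ! Suc i) \<in> E" "\<not> (\<exists>m \<in> N. (last p, m) \<in> E)"
  | (inf) p where "b = BInf (smap lab p)" "shd p = n" "\<forall>i. p !! i \<in> N \<and> (p !! i, p !! Suc i) \<in> E"
  using assms unfolding BJ_def by blast

lemma cons_paths_from_iff:
  "p \<in> cons_paths_from R P \<rho> x \<longleftrightarrow> is_fin_path R p \<and> hd p = Fact x \<and> cons_fin P \<rho> p"
  unfolding cons_paths_from_def by simp

lemma cons_paths_from_not_Nil: "p \<in> cons_paths_from R P \<rho> x \<Longrightarrow> p \<noteq> []"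
  unfolding cons_paths_from_iff is_fin_path_def by simp

lemma take_in_cons_paths_from:
  "p \<in> cons_paths_from R P \<rho> x \<Longrightarrow> 0 < k \<Longrightarrow> take k p \<in> cons_paths_from R P \<rho> x"
  unfolding cons_paths_from_iff
  using is_fin_path_take cons_fin_take by (metis hd_take is_fin_path_def)

lemma snoc_in_cons_paths_from_is_fact_iff:
  assumes "p @ [s] \<in> cons_paths_from R P \<rho> x" "p \<noteq> []"
  shows "is_fact s \<longleftrightarrow> \<not> is_fact (last p)"
  using assms gedge_alternates unfolding cons_paths_from_iff is_fin_path_snoc[OF assms(2)] by blast

lemma stake_max_path_in_cons_paths_from:
  assumes "BInf q \<in> max_paths R \<tau> x"
  shows "stake (Suc n) q \<in> cons_paths_from R PlF \<tau> x"
proof -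
  have q: "shd q = Fact x" "\<forall>i. gedge R (q !! i) (q !! Suc i)" "cons_inf PlF \<tau> q"
    using assms by (simp_all add: BInf_in_max_paths_iff)
  have hd: "hd (stake (Suc n) q) = Fact x"
    using q(1) by simp
  then have "is_fin_path R (stake (Suc n) q)"
    using q(2) unfolding is_fin_path_def by (simp add: is_state_def del: stake.simps)
  moreover have "cons_fin PlF \<tau> (stake (Suc n) q)"
    using q(3) unfolding cons_fin_def cons_inf_def by (simp add: take_stake min_def del: stake.simps)
  ultimately show ?thesis
    using hd unfolding cons_paths_from_iff by simp
qed

lemma positional_strategy_gen:
  assumes "positional_strategy R PlF g"
  shows "pos_to_gen g \<in> gen_strategies R PlF"
  unfolding gen_strategies_def
proof (intro CollectI allI impI)
  fix p
  assume p: "is_fin_path R p \<and> owner (last p) = PlF \<and> has_succ R (last p)"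
  then have "is_state R (last p)"
    using is_fin_path_nth_is_state[of R p "length p - 1"]
    unfolding is_fin_path_def by (simp add: last_conv_nth)
  then show "gedge R (last p) (pos_to_gen g p)"
    using assms p unfolding positional_strategy_def pos_to_gen_def by blast
qed

context
  fixes neg lit Fd R \<tau>
  assumes frame: "just_frame neg lit Fd R" and \<tau>: "\<tau> \<in> gen_strategies R PlF"
begin

lemma extend_cons_path_by_rule:
  assumes p: "p \<in> cons_paths_from R PlF \<tau> x" and "last p = Fact y" "(y, A) \<in> R"
  shows "p @ [Rule y A, \<tau> (p @ [Rule y A])] \<in> cons_paths_from R PlF \<tau> x"
proof -
  have "p \<noteq> []"
    using p by (rule cons_paths_from_not_Nil)
  have path: "is_fin_path R (p @ [Rule y A])" "cons_fin PlF \<tau> (p @ [Rule y A])"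
    using p assms(2,3) \<open>p \<noteq> []\<close> unfolding cons_paths_from_iff
    by (simp_all add: is_fin_path_snoc cons_fin_snoc)
  then have "gedge R (Rule y A) (\<tau> (p @ [Rule y A]))"
    using \<tau> has_succ_Rule[OF frame assms(3)] unfolding gen_strategies_def by fastforce
  moreover have ne: "p @ [Rule y A] \<noteq> []"
    by simp
  ultimately have "(p @ [Rule y A]) @ [\<tau> (p @ [Rule y A])] \<in> cons_paths_from R PlF \<tau> x"
    using p path \<open>p \<noteq> []\<close> unfolding cons_paths_from_iff is_fin_path_snoc[OF ne] cons_fin_snoc[OF ne]
    by simp
  then show ?thesis
    by simp
qed

end

lemma two_step_chain:
  assumes "\<forall>i < length ps - 1. \<exists>r s. ps ! Suc i = ps ! i @ [r, s]" "length (ps ! 0) = 1"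
    and "j < length ps" "i \<le> j"
  shows "length (ps ! j) = 2 * j + 1" "take (2 * i + 1) (ps ! j) = ps ! i"
proof -
  have len: "length (ps ! j) = 2 * j + 1" if "j < length ps" for j
    using that
  proof (induction j)
    case (Suc j)
    obtain r s where "ps ! Suc j = ps ! j @ [r, s]"
      using assms(1) Suc.prems by (metis Suc_lessE diff_Suc_1)
    then show ?case
      using Suc by simp
  qed (use assms(2) in simp)
  show "length (ps ! j) = 2 * j + 1"
    using len assms(3) .
  show "take (2 * i + 1) (ps ! j) = ps ! i"
    using assms(3,4)
  proof (induction j)
    case (Suc j)
    show ?case
    proof (cases "i = Suc j")
      case False
      obtain r s where "ps ! Suc j = ps ! j @ [r, s]"
        using assms(1) Suc.prems(1) by (metis Suc_lessE diff_Suc_1)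
      then show ?thesis
        using Suc False len[of j] by simp
    qed (use len Suc.prems in simp)
  qed (use len in simp)
qed

lemma two_step_chain_stream:
  assumes "\<forall>i. \<exists>r s. P !! Suc i = P !! i @ [r, s]" "length (shd P) = 1" "i \<le> j"
  shows "length (P !! j) = 2 * j + 1" "take (2 * i + 1) (P !! j) = P !! i"
proof -
  let ?ps = "stake (Suc j) P"
  have "\<forall>i < length ?ps - 1. \<exists>r s. ?ps ! Suc i = ?ps ! i @ [r, s]" "length (?ps ! 0) = 1"
    using assms(1,2) by (simp_all del: stake.simps)
  from two_step_chain[OF this, of j i] assms(3)
  show "length (P !! j) = 2 * j + 1" "take (2 * i + 1) (P !! j) = P !! i"
    by (simp_all del: stake.simps)
qed

lemma stake_diagonal_two_step_chain:
  assumes "\<forall>i. \<exists>r s. P !! Suc i = P !! i @ [r, s]" "length (shd P) = 1"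
  shows "stake (2 * i + 1) (smap (\<lambda>j. P !! j ! j) nats) = P !! i"
proof (rule nth_equalityI)
  show "length (stake (2 * i + 1) (smap (\<lambda>j. P !! j ! j) nats)) = length (P !! i)"
    using two_step_chain_stream(1)[OF assms order_refl] by simp
next
  fix k
  assume "k < length (stake (2 * i + 1) (smap (\<lambda>j. P !! j ! j) nats))"
  then have k: "k < 2 * i + 1"
    by simp
  have "P !! k ! k = P !! i ! k"
  proof (cases "k \<le> i")
    case True
    then have "P !! k = take (2 * k + 1) (P !! i)"
      using two_step_chain_stream(2)[OF assms True] by simp
    then show ?thesis
      by simp
  next
    case False
    then have "P !! i = take (2 * i + 1) (P !! k)"
      using two_step_chain_stream(2)[OF assms, of i k] by simp
    then show ?thesis
      using k by simp
  qed
  with k show "stake (2 * i + 1) (smap (\<lambda>j. P !! j ! j) nats) ! k = P !! i ! k"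
    by (subst stake_nth) simp_all
qed

section \<open>Branches of the play tree\<close>

definition tree_nodes :: "('f \<times> 'f set) set \<Rightarrow> ('f state list \<Rightarrow> 'f state) \<Rightarrow> 'f
    \<Rightarrow> 'f state list set" where
  "tree_nodes R \<tau> x = {p \<in> cons_paths_from R PlF \<tau> x. is_fact (last p)}"

definition tree_edges :: "('f \<times> 'f set) set \<Rightarrow> ('f state list \<Rightarrow> 'f state) \<Rightarrow> 'f
    \<Rightarrow> ('f state list \<times> 'f state list) set" where
  "tree_edges R \<tau> x = {(p, q). p \<in> tree_nodes R \<tau> x \<and> q \<in> cons_paths_from R PlF \<tau> x \<and>
     (\<exists>r s. q = p @ [r, s])}"

lemma two_step_extension_in_tree_nodes:
  assumes "p \<in> tree_nodes R \<tau> x" "p @ [r, s] \<in> cons_paths_from R PlF \<tau> x"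
  shows "\<not> is_fact r" "p @ [r] \<in> cons_paths_from R PlF \<tau> x" "p @ [r, s] \<in> tree_nodes R \<tau> x"
proof -
  have p: "p \<noteq> []" "is_fact (last p)"
    using assms(1) unfolding tree_nodes_def by (auto dest: cons_paths_from_not_Nil)
  show pr: "p @ [r] \<in> cons_paths_from R PlF \<tau> x"
    using take_in_cons_paths_from[OF assms(2), of "Suc (length p)"] by simp
  show "\<not> is_fact r"
    using snoc_in_cons_paths_from_is_fact_iff[OF pr p(1)] p(2) by simp
  then have "is_fact s"
    using snoc_in_cons_paths_from_is_fact_iff[of "p @ [r]" s] assms(2) by simp
  then show "p @ [r, s] \<in> tree_nodes R \<tau> x"
    using assms(2) unfolding tree_nodes_def by simp
qed

lemma tree_edge_target:
  assumes "(p, q) \<in> tree_edges R \<tau> x"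
  shows "q \<in> tree_nodes R \<tau> x"
proof -
  obtain r s where "p \<in> tree_nodes R \<tau> x" "q = p @ [r, s]" "q \<in> cons_paths_from R PlF \<tau> x"
    using assms unfolding tree_edges_def by auto
  then show ?thesis
    using two_step_extension_in_tree_nodes(3) by simp
qed

lemma filtered_play_tree:
  "filter_rules (play_tree R PlF \<tau> x) = (tree_nodes R \<tau> x, tree_edges R \<tau> x, last)"
proof -
  let ?C = "cons_paths_from R PlF \<tau> x"
  let ?E = "{(p, p @ [s]) | p s. p \<in> ?C \<and> p @ [s] \<in> ?C}"
  have "(p, q) \<in> tree_edges R \<tau> x \<longleftrightarrow> p \<in> tree_nodes R \<tau> x \<and> q \<in> tree_nodes R \<tau> x \<and>
      ((p, q) \<in> ?E \<or> (\<exists>k \<in> ?C. \<not> is_fact (last k) \<and> (p, k) \<in> ?E \<and> (k, q) \<in> ?E))" for p q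
  proof
    assume "(p, q) \<in> tree_edges R \<tau> x"
    then obtain r s where "q = p @ [r, s]" "p \<in> tree_nodes R \<tau> x" "p @ [r, s] \<in> ?C"
      unfolding tree_edges_def by blast
    then show "p \<in> tree_nodes R \<tau> x \<and> q \<in> tree_nodes R \<tau> x \<and>
        ((p, q) \<in> ?E \<or> (\<exists>k \<in> ?C. \<not> is_fact (last k) \<and> (p, k) \<in> ?E \<and> (k, q) \<in> ?E))"
      using two_step_extension_in_tree_nodes[of p R \<tau> x r s] unfolding tree_nodes_def
      by (auto intro!: bexI[of _ "p @ [r]"])
  next
    assume pq: "p \<in> tree_nodes R \<tau> x \<and> q \<in> tree_nodes R \<tau> x \<and>
        ((p, q) \<in> ?E \<or> (\<exists>k \<in> ?C. \<not> is_fact (last k) \<and> (p, k) \<in> ?E \<and> (k, q) \<in> ?E))"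
    then have "is_fact (last p)" "is_fact (last q)" "p \<noteq> []"
      unfolding tree_nodes_def by (auto dest: cons_paths_from_not_Nil)
    then have "(p, q) \<notin> ?E"
      using snoc_in_cons_paths_from_is_fact_iff by fastforce
    then show "(p, q) \<in> tree_edges R \<tau> x"
      using pq unfolding tree_edges_def by auto
  qed
  then show ?thesis
    unfolding filter_rules_def play_tree_def Let_def tree_nodes_def[symmetric]
    by (simp add: tree_nodes_def set_eq_iff)
qed

context
  fixes neg lit Fd and R :: "('f \<times> 'f set) set" and \<tau> and x :: 'f
  assumes frame: "just_frame neg lit Fd R" and \<tau>: "\<tau> \<in> gen_strategies R PlF"
begin

lemma tree_edge_exists_iff:
  assumes "p \<in> tree_nodes R \<tau> x"
  shows "(\<exists>q. (p, q) \<in> tree_edges R \<tau> x) \<longleftrightarrow> has_succ R (last p)"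
proof
  assume "\<exists>q. (p, q) \<in> tree_edges R \<tau> x"
  then obtain r s where "p @ [r, s] \<in> cons_paths_from R PlF \<tau> x"
    unfolding tree_edges_def by blast
  then have "is_fin_path R (p @ [r])"
    using two_step_extension_in_tree_nodes(2)[OF assms] unfolding cons_paths_from_iff by blast
  moreover have "p \<noteq> []"
    using assms unfolding tree_nodes_def by (blast dest: cons_paths_from_not_Nil)
  ultimately show "has_succ R (last p)"
    unfolding has_succ_def by (auto simp: is_fin_path_snoc)
next
  assume "has_succ R (last p)"
  moreover obtain y where y: "last p = Fact y"
    using assms unfolding tree_nodes_def by (metis is_fact_iff mem_Collect_eq)
  ultimately obtain A where "(y, A) \<in> R"
    unfolding has_succ_def by (auto simp: gedge_Fact_iff)
  moreover have "p \<in> cons_paths_from R PlF \<tau> x"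
    using assms unfolding tree_nodes_def by simp
  ultimately have "p @ [Rule y A, \<tau> (p @ [Rule y A])] \<in> cons_paths_from R PlF \<tau> x"
    using extend_cons_path_by_rule[OF frame \<tau> _ y] by blast
  then have "(p, p @ [Rule y A, \<tau> (p @ [Rule y A])]) \<in> tree_edges R \<tau> x"
    using assms unfolding tree_edges_def by blast
  then show "\<exists>q. (p, q) \<in> tree_edges R \<tau> x" ..
qed

lemma tree_edges_chain:
  assumes "\<forall>i < length ps - 1. (ps ! i, ps ! Suc i) \<in> tree_edges R \<tau> x"
  shows "\<forall>i < length ps - 1. \<exists>r s. ps ! Suc i = ps ! i @ [r, s]"
  using assms unfolding tree_edges_def by blast

lemma fin_tree_branch_in_max_paths:
  assumes ps: "ps \<noteq> []" "hd ps = [Fact x]" "set ps \<subseteq> tree_nodes R \<tau> x"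
    "\<forall>i < length ps - 1. (ps ! i, ps ! Suc i) \<in> tree_edges R \<tau> x"
    "\<not> (\<exists>q \<in> tree_nodes R \<tau> x. (last ps, q) \<in> tree_edges R \<tau> x)"
  shows "BFin (map last ps) \<in> even_positions ` max_paths R \<tau> x"
proof -
  define q where "q = last ps"
  define k where "k = length ps - 1"
  have q: "q = ps ! k" "q \<in> tree_nodes R \<tau> x"
    using ps(1,3) unfolding q_def k_def by (auto simp: last_conv_nth)
  have chain: "\<forall>i < length ps - 1. \<exists>r s. ps ! Suc i = ps ! i @ [r, s]" "length (ps ! 0) = 1"
    using tree_edges_chain[OF ps(4)] ps(1,2) by (auto simp: hd_conv_nth)
  have k: "k < length ps" "length ps = Suc k"
    using ps(1) unfolding k_def by auto
  have len: "length q = 2 * k + 1" and prefix: "i \<le> k \<Longrightarrow> take (2 * i + 1) q = ps ! i" for i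
    using two_step_chain[OF chain k(1)] q(1) by auto
  have "\<not> has_succ R (last q)"
  proof
    assume "has_succ R (last q)"
    then obtain q' where "(q, q') \<in> tree_edges R \<tau> x"
      using tree_edge_exists_iff[OF q(2)] by blast
    moreover from this have "q' \<in> tree_nodes R \<tau> x"
      by (rule tree_edge_target)
    ultimately show False
      using ps(5) unfolding q_def by blast
  qed
  moreover have "is_fin_path R q" "hd q = Fact x" "cons_fin PlF \<tau> q"
    using q(2) unfolding tree_nodes_def cons_paths_from_iff by simp_all
  ultimately have "BFin q \<in> max_paths R \<tau> x"
    unfolding BFin_in_max_paths_iff by simp
  moreover have "map last ps = map (\<lambda>i. q ! (2 * i)) [0..<Suc (length q div 2)]"
  proof (rule nth_equalityI)
    fix i
    assume i: "i < length (map last ps)"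
    then have "i \<le> k" "2 * i < length q"
      using k len by simp_all
    then show "map last ps ! i = map (\<lambda>i. q ! (2 * i)) [0..<Suc (length q div 2)] ! i"
      using i prefix[of i] last_take_Suc[of "2 * i" q] len by (simp del: upt_Suc)
  qed (use len k in simp)
  ultimately show ?thesis
    by force
qed

lemma fin_max_path_in_tree_branches:
  assumes q: "BFin q \<in> max_paths R \<tau> x"
  shows "even_positions (BFin q) \<in> BJ (tree_nodes R \<tau> x, tree_edges R \<tau> x, last) [Fact x]"
proof -
  have Q: "is_fin_path R q" "hd q = Fact x" "\<not> has_succ R (last q)" "cons_fin PlF \<tau> q"
    using q by (simp_all add: BFin_in_max_paths_iff)
  then have C: "q \<in> cons_paths_from R PlF \<tau> x"
    unfolding cons_paths_from_iff by simp
  define k where "k = length q div 2"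
  have len: "length q = 2 * k + 1"
    using max_path_odd_length[OF frame q] unfolding k_def by presburger
  define ps where "ps = map (\<lambda>i. take (2 * i + 1) q) [0..<Suc k]"
  have ps_nth: "i \<le> k \<Longrightarrow> ps ! i = take (2 * i + 1) q" for i
    unfolding ps_def by (simp del: upt_Suc)
  have nodes: "set ps \<subseteq> tree_nodes R \<tau> x"
  proof
    fix p
    assume "p \<in> set ps"
    then obtain i where "i \<le> k" "p = take (2 * i + 1) q"
      unfolding ps_def by (auto simp del: upt_Suc simp: less_Suc_eq_le)
    moreover have "is_fact (q ! (2 * i))" if "i \<le> k" for i
      using fin_path_is_fact_nth_iff[OF Q(1,2), of "2 * i"] that len by simp
    ultimately show "p \<in> tree_nodes R \<tau> x"
      using take_in_cons_paths_from[OF C, of "2 * i + 1"] last_take_Suc[of "2 * i" q] len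
      unfolding tree_nodes_def by simp
  qed
  have edges: "\<forall>i < length ps - 1. (ps ! i, ps ! Suc i) \<in> tree_edges R \<tau> x"
  proof (intro allI impI)
    fix i
    assume "i < length ps - 1"
    then have i: "i < k" "2 * i + 2 < length q"
      using len unfolding ps_def by simp_all
    have "ps ! Suc i = ps ! i @ [q ! (2 * i + 1), q ! (2 * i + 2)]"
      using ps_nth[of i] ps_nth[of "Suc i"] take_two_more[OF i(2)] i(1) by (simp add: numeral_3_eq_3)
    moreover have "length ps = Suc k"
      unfolding ps_def by simp
    then have "ps ! i \<in> tree_nodes R \<tau> x" "ps ! Suc i \<in> tree_nodes R \<tau> x"
      using nodes i(1) nth_mem[of i ps] nth_mem[of "Suc i" ps] by auto
    ultimately show "(ps ! i, ps ! Suc i) \<in> tree_edges R \<tau> x"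
      unfolding tree_edges_def tree_nodes_def by simp
  qed
  have "ps \<noteq> []" "last ps = q"
    unfolding ps_def using len by simp_all
  then have "q \<in> tree_nodes R \<tau> x"
    using nodes last_in_set by blast
  then have "\<not> (\<exists>p \<in> tree_nodes R \<tau> x. (last ps, p) \<in> tree_edges R \<tau> x)"
    using tree_edge_exists_iff Q(3) \<open>last ps = q\<close> by blast
  moreover have "hd ps = [Fact x]"
    using Q(2) len unfolding ps_def by (cases q) (simp_all add: upt_conv_Cons del: upt_Suc)
  moreover have "map last ps = map (\<lambda>i. q ! (2 * i)) [0..<Suc k]"
    unfolding ps_def map_map
    by (rule map_cong) (use len in \<open>auto simp: last_take_Suc simp del: upt_Suc\<close>)
  then have "even_positions (BFin q) = BFin (map last ps)"
    by (simp add: k_def del: upt_Suc)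
  ultimately show ?thesis
    using BFin_in_BJ \<open>ps \<noteq> []\<close> nodes edges by metis
qed

lemma inf_tree_branch_in_max_paths:
  assumes P: "shd P = [Fact x]" "\<forall>i. P !! i \<in> tree_nodes R \<tau> x \<and> (P !! i, P !! Suc i) \<in> tree_edges R \<tau> x"
  shows "BInf (smap last P) \<in> even_positions ` max_paths R \<tau> x"
proof -
  have chain: "\<forall>i. \<exists>r s. P !! Suc i = P !! i @ [r, s]" "length (shd P) = 1"
    using P unfolding tree_edges_def by auto
  define q where "q = smap (\<lambda>j. P !! j ! j) nats"
  have prefix: "stake (2 * i + 1) q = P !! i" for i
    unfolding q_def by (rule stake_diagonal_two_step_chain[OF chain])
  have C: "P !! i \<in> cons_paths_from R PlF \<tau> x" for i
    using P(2) unfolding tree_nodes_def by simp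
  have S: "j < length (stake (2 * Suc j + 1) q) - 1" "stake (2 * Suc j + 1) q ! j = q !! j"
    "stake (2 * Suc j + 1) q ! Suc j = q !! Suc j" "take (Suc j) (stake (2 * Suc j + 1) q) = stake (Suc j) q"
    for j
    by (simp_all add: take_stake min_def del: stake.simps)
  have "gedge R (q !! j) (q !! Suc j)" for j
    using C[of "Suc j"] S[of j] unfolding prefix[symmetric] cons_paths_from_iff is_fin_path_def
    by metis
  moreover have "cons_inf PlF \<tau> q"
    using C S unfolding prefix[symmetric] cons_paths_from_iff cons_fin_def cons_inf_def by metis
  moreover have "shd q = Fact x"
    using P(1) unfolding q_def by simp
  ultimately have "BInf q \<in> max_paths R \<tau> x"
    by (simp add: BInf_in_max_paths_iff)
  moreover have "smap last P = smap (\<lambda>i. q !! (2 * i)) nats"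
    by (rule stream_eqI) (simp add: prefix[symmetric] last_stake_Suc del: stake.simps)
  ultimately show ?thesis
    by (metis even_positions.simps(2) image_eqI)
qed

lemma inf_max_path_in_tree_branches:
  assumes q: "BInf q \<in> max_paths R \<tau> x"
  shows "even_positions (BInf q) \<in> BJ (tree_nodes R \<tau> x, tree_edges R \<tau> x, last) [Fact x]"
proof -
  have Q: "shd q = Fact x" "\<forall>i. gedge R (q !! i) (q !! Suc i)"
    using q by (simp_all add: BInf_in_max_paths_iff)
  define P where "P = smap (\<lambda>i. stake (2 * i + 1) q) nats"
  have nodes: "P !! i \<in> tree_nodes R \<tau> x" for i
    using stake_max_path_in_cons_paths_from[OF q, of "2 * i"] inf_path_is_fact_nth_iff[OF Q, of "2 * i"]
    unfolding P_def tree_nodes_def by (simp add: last_stake_Suc del: stake.simps)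
  have "P !! Suc i = P !! i @ [q !! (2 * i + 1), q !! (2 * i + 2)]" for i
    using stake_Suc_Suc[of "2 * i + 1" q] unfolding P_def by (simp del: stake.simps)
  then have "(P !! i, P !! Suc i) \<in> tree_edges R \<tau> x" for i
    using nodes[of i] nodes[of "Suc i"] unfolding tree_edges_def tree_nodes_def by simp
  moreover have "shd P = [Fact x]"
    using Q(1) unfolding P_def by simp
  moreover have "smap (\<lambda>i. q !! (2 * i)) nats = smap last P"
    by (rule stream_eqI) (simp add: P_def last_stake_Suc del: stake.simps)
  then have "even_positions (BInf q) = BInf (smap last P)"
    by simp
  ultimately show ?thesis
    using BInf_in_BJ nodes by metis
qed

lemma BJ_filtered_play_tree:
  "BJ (filter_rules (play_tree R PlF \<tau> x)) [Fact x] = even_positions ` max_paths R \<tau> x"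
  unfolding filtered_play_tree
proof (intro equalityI subsetI)
  fix b
  assume "b \<in> BJ (tree_nodes R \<tau> x, tree_edges R \<tau> x, last) [Fact x]"
  then show "b \<in> even_positions ` max_paths R \<tau> x"
    by (cases rule: BJ_cases) (simp_all add: fin_tree_branch_in_max_paths inf_tree_branch_in_max_paths)
next
  fix b
  assume "b \<in> even_positions ` max_paths R \<tau> x"
  then obtain c where "c \<in> max_paths R \<tau> x" "b = even_positions c"
    by blast
  then show "b \<in> BJ (tree_nodes R \<tau> x, tree_edges R \<tau> x, last) [Fact x]"
    by (cases c) (simp_all add: fin_max_path_in_tree_branches inf_max_path_in_tree_branches
        del: even_positions.simps)
qed

end

section \<open>Branches of the play graph\<close>

definition graph_nodes :: "('f \<times> 'f set) set \<Rightarrow> ('f state \<Rightarrow> 'f state) \<Rightarrow> 'f \<Rightarrow> 'f state set" where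
  "graph_nodes R g x = {s. is_fact s \<and> (\<exists>p \<in> cons_paths_from R PlF (pos_to_gen g) x. s \<in> set p)}"

definition graph_edges :: "('f \<times> 'f set) set \<Rightarrow> ('f state \<Rightarrow> 'f state) \<Rightarrow> 'f
    \<Rightarrow> ('f state \<times> 'f state) set" where
  "graph_edges R g x = {(s, s'). s \<in> graph_nodes R g x \<and>
     (\<exists>y A. s = Fact y \<and> (y, A) \<in> R \<and> s' = g (Rule y A))}"

lemma graph_edgeI:
  "Fact y \<in> graph_nodes R g x \<Longrightarrow> (y, A) \<in> R \<Longrightarrow> (Fact y, g (Rule y A)) \<in> graph_edges R g x"
  unfolding graph_edges_def by auto

lemma pos_to_gen_apply: "pos_to_gen g p = g (last p)"
  unfolding pos_to_gen_def ..

lemma graph_node_is_last: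
  assumes "s \<in> graph_nodes R g x"
  obtains p where "p \<in> cons_paths_from R PlF (pos_to_gen g) x" "last p = s"
proof -
  obtain p where p: "p \<in> cons_paths_from R PlF (pos_to_gen g) x" "s \<in> set p"
    using assms unfolding graph_nodes_def by blast
  obtain i where "i < length p" "p ! i = s"
    using p(2) by (meson in_set_conv_nth)
  then show ?thesis
    using that[of "take (Suc i) p"] take_in_cons_paths_from[OF p(1)] last_take_Suc[of i p] by simp
qed

lemma two_step_extension_graph_edge:
  assumes "p @ [r, s] \<in> cons_paths_from R PlF (pos_to_gen g) x" "p \<noteq> []" "is_fact (last p)"
  shows "(last p, s) \<in> graph_edges R g x"
proof -
  let ?C = "cons_paths_from R PlF (pos_to_gen g) x"
  have "p @ [r] \<in> ?C" "p \<in> ?C"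
    using take_in_cons_paths_from[OF assms(1), of "Suc (length p)"]
      take_in_cons_paths_from[OF assms(1), of "length p"] assms(2) by simp_all
  then have "gedge R (last p) r"
    using assms(2) unfolding cons_paths_from_iff by (simp add: is_fin_path_snoc)
  then obtain y A where yA: "last p = Fact y" "r = Rule y A" "(y, A) \<in> R"
    using assms(3) by (cases "last p") (auto simp: gedge_Fact_iff)
  have ne: "p @ [r] \<noteq> []"
    by simp
  have "cons_fin PlF (pos_to_gen g) ((p @ [r]) @ [s])"
    using assms(1) unfolding cons_paths_from_iff by simp
  then have "s = g r"
    using yA(2) unfolding cons_fin_snoc[OF ne] pos_to_gen_apply by simp
  moreover have "last p \<in> graph_nodes R g x"
    using \<open>p \<in> ?C\<close> assms(2,3) last_in_set unfolding graph_nodes_def by blast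
  ultimately show ?thesis
    using yA graph_edgeI by simp
qed

lemma cons_path_step:
  assumes "p \<in> cons_paths_from R PlF (pos_to_gen g) x" "i < length p - 1"
  shows "gedge R (p ! i) (p ! Suc i)" "\<not> is_fact (p ! i) \<Longrightarrow> p ! Suc i = g (p ! i)"
  using assms last_take_Suc[of i p]
  unfolding cons_paths_from_iff is_fin_path_def cons_fin_def pos_to_gen_apply owner_eq_PlF_iff by auto

definition rule_step :: "('f \<times> 'f set) set \<Rightarrow> ('f state \<Rightarrow> 'f state) \<Rightarrow> (nat \<Rightarrow> 'f state)
    \<Rightarrow> (nat \<Rightarrow> 'f set) \<Rightarrow> nat \<Rightarrow> bool" where
  "rule_step R g P A i \<longleftrightarrow> is_fact (P i) \<and> (fact_of (P i), A i) \<in> R \<and>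
     P (Suc i) = g (Rule (fact_of (P i)) (A i))"

definition interleave_rules :: "(nat \<Rightarrow> 'f state) \<Rightarrow> (nat \<Rightarrow> 'f set) \<Rightarrow> nat \<Rightarrow> 'f state" where
  "interleave_rules P A j =
     (if even j then P (j div 2) else Rule (fact_of (P (j div 2))) (A (j div 2)))"

lemma interleave_rules_0 [simp]: "interleave_rules P A 0 = P 0"
  unfolding interleave_rules_def by simp

lemma interleave_rules_even [simp]: "interleave_rules P A (2 * i) = P i"
  unfolding interleave_rules_def by simp

context
  fixes neg lit Fd and R :: "('f \<times> 'f set) set" and g
  assumes frame: "just_frame neg lit Fd R" and g: "positional_strategy R PlF g"
begin

lemma gedge_positional_strategy: "(y, A) \<in> R \<Longrightarrow> gedge R (Rule y A) (g (Rule y A))"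
  using g has_succ_Rule[OF frame] unfolding positional_strategy_def by (simp add: is_state_def)

lemma graph_edge_extends_path:
  assumes p: "p \<in> cons_paths_from R PlF (pos_to_gen g) x" "last p = Fact y" and "(y, A) \<in> R"
  shows "p @ [Rule y A, g (Rule y A)] \<in> cons_paths_from R PlF (pos_to_gen g) x"
  using extend_cons_path_by_rule[OF frame positional_strategy_gen[OF g] assms]
  by (simp add: pos_to_gen_apply)

lemma graph_edge_target: "(s, s') \<in> graph_edges R g x \<Longrightarrow> s' \<in> graph_nodes R g x"
proof -
  assume "(s, s') \<in> graph_edges R g x"
  then obtain y A where s: "s \<in> graph_nodes R g x" "s = Fact y" "(y, A) \<in> R" "s' = g (Rule y A)"
    unfolding graph_edges_def by blast
  then obtain p where p: "p \<in> cons_paths_from R PlF (pos_to_gen g) x" "last p = Fact y"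
    using graph_node_is_last by metis
  have "p @ [Rule y A, s'] \<in> cons_paths_from R PlF (pos_to_gen g) x"
    using graph_edge_extends_path[OF p s(3)] s(4) by simp
  moreover have "is_fact s'"
    using gedge_alternates[OF gedge_positional_strategy[OF s(3)]] s(4) by simp
  ultimately show "s' \<in> graph_nodes R g x"
    unfolding graph_nodes_def by force
qed

lemma filtered_play_graph:
  "filter_rules (play_graph R PlF g x) = (graph_nodes R g x, graph_edges R g x, id)"
proof -
  let ?C = "cons_paths_from R PlF (pos_to_gen g) x"
  let ?N = "{s. \<exists>p \<in> ?C. s \<in> set p}"
  let ?E = "{(s, s'). \<exists>p \<in> ?C. \<exists>i < length p - 1. p ! i = s \<and> p ! Suc i = s'}"
  have E_gedge: "gedge R s s'" if E: "(s, s') \<in> ?E" for s s'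
  proof -
    obtain p i where "p \<in> ?C" "i < length p - 1" "s = p ! i" "s' = p ! Suc i"
      using E by auto
    then show ?thesis
      using cons_path_step(1) by simp
  qed
  have edge_iff: "(s, s') \<in> graph_edges R g x \<longleftrightarrow> s \<in> graph_nodes R g x \<and> s' \<in> graph_nodes R g x \<and>
      ((s, s') \<in> ?E \<or> (\<exists>k \<in> ?N. \<not> is_fact k \<and> (s, k) \<in> ?E \<and> (k, s') \<in> ?E))" for s s'
  proof
    assume edge: "(s, s') \<in> graph_edges R g x"
    then obtain y A where s: "s \<in> graph_nodes R g x" "s = Fact y" "(y, A) \<in> R" "s' = g (Rule y A)"
      unfolding graph_edges_def by blast
    then obtain p where p: "p \<in> ?C" "last p = Fact y"
      using graph_node_is_last by metis
    define p' where "p' = p @ [Rule y A, s']"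
    have p': "p' \<in> ?C"
      unfolding p'_def using graph_edge_extends_path[OF p s(3)] s(4) by simp
    have nth: "p' ! (length p - 1) = s" "p' ! length p = Rule y A" "p' ! Suc (length p) = s'"
      "length p' = length p + 2" "Suc (length p - 1) = length p"
      using p s(2) cons_paths_from_not_Nil[OF p(1)] unfolding p'_def
      by (simp_all add: nth_append last_conv_nth)
    have "(s, Rule y A) \<in> ?E"
      using p' nth by (auto intro!: bexI[of _ p'] exI[of _ "length p - 1"])
    moreover have "(Rule y A, s') \<in> ?E"
      using p' nth by (auto intro!: bexI[of _ p'] exI[of _ "length p"])
    moreover have "Rule y A \<in> ?N"
      using p' nth nth_mem[of "length p" p'] by auto
    ultimately have "\<exists>k \<in> ?N. \<not> is_fact k \<and> (s, k) \<in> ?E \<and> (k, s') \<in> ?E"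
      by (intro bexI[of _ "Rule y A"]) simp_all
    then show "s \<in> graph_nodes R g x \<and> s' \<in> graph_nodes R g x \<and>
      ((s, s') \<in> ?E \<or> (\<exists>k \<in> ?N. \<not> is_fact k \<and> (s, k) \<in> ?E \<and> (k, s') \<in> ?E))"
      using s(1) graph_edge_target[OF edge] by (intro conjI disjI2)
  next
    assume "s \<in> graph_nodes R g x \<and> s' \<in> graph_nodes R g x \<and>
      ((s, s') \<in> ?E \<or> (\<exists>k \<in> ?N. \<not> is_fact k \<and> (s, k) \<in> ?E \<and> (k, s') \<in> ?E))"
    then obtain k where s: "s \<in> graph_nodes R g x" "(s, k) \<in> ?E" "(k, s') \<in> ?E"
      using E_gedge gedge_alternates unfolding graph_nodes_def by blast
    then obtain y A where yA: "s = Fact y" "k = Rule y A" "(y, A) \<in> R"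
      using E_gedge[OF s(2)] unfolding graph_nodes_def by (cases s) (auto simp: gedge_Fact_iff)
    moreover have "s' = g k"
      using s(3) yA(2) cons_path_step(2) by fastforce
    ultimately show "(s, s') \<in> graph_edges R g x"
      using graph_edgeI s(1) by simp
  qed
  have nodes: "{s \<in> ?N. is_fact s} = graph_nodes R g x"
    unfolding graph_nodes_def by auto
  have "filter_rules (play_graph R PlF g x) = ({s \<in> ?N. is_fact (id s)}, {(s, s').
      s \<in> {s \<in> ?N. is_fact (id s)} \<and> s' \<in> {s \<in> ?N. is_fact (id s)} \<and>
      ((s, s') \<in> ?E \<or> (\<exists>k \<in> ?N. \<not> is_fact (id k) \<and> (s, k) \<in> ?E \<and> (k, s') \<in> ?E))}, id)"
    unfolding filter_rules_def play_graph_def Let_def prod.case ..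
  also have "\<dots> = (graph_nodes R g x, graph_edges R g x, id)"
    unfolding nodes id_apply edge_iff[symmetric] by simp
  finally show ?thesis .
qed

lemma graph_edge_rule_step:
  "(s, s') \<in> graph_edges R g x \<Longrightarrow> \<exists>A. is_fact s \<and> (fact_of s, A) \<in> R \<and> s' = g (Rule (fact_of s) A)"
  unfolding graph_edges_def by auto

lemma interleave_rules_cases:
  assumes "rule_step R g P A (j div 2)"
  obtains (fact) y B where "interleave_rules P A j = Fact y"
      "interleave_rules P A (Suc j) = Rule y B" "(y, B) \<in> R"
  | (rule) y B where "interleave_rules P A j = Rule y B"
      "interleave_rules P A (Suc j) = g (Rule y B)" "(y, B) \<in> R"
proof -
  define i where "i = j div 2"
  have step: "is_fact (P i)" "(fact_of (P i), A i) \<in> R" "P (Suc i) = g (Rule (fact_of (P i)) (A i))"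
    using assms unfolding rule_step_def i_def by simp_all
  show ?thesis
  proof (cases "even j")
    case True
    then have "j = 2 * i"
      unfolding i_def by simp
    moreover obtain y where "P i = Fact y"
      using step(1) by (cases "P i") auto
    ultimately show ?thesis
      using fact[of y "A i"] step(2) unfolding interleave_rules_def by simp
  next
    case False
    then have "j = Suc (2 * i)"
      unfolding i_def by presburger
    then show ?thesis
      using rule[of "fact_of (P i)" "A i"] step(2,3) unfolding interleave_rules_def by simp
  qed
qed

lemma interleave_rules_gedge:
  assumes "rule_step R g P A (j div 2)"
  shows "gedge R (interleave_rules P A j) (interleave_rules P A (Suc j))"
  using assms by (cases rule: interleave_rules_cases) (simp_all add: gedge_positional_strategy)

lemma interleave_rules_consistent:
  assumes "rule_step R g P A (j div 2)" "owner (interleave_rules P A j) = PlF"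
  shows "g (interleave_rules P A j) = interleave_rules P A (Suc j)"
  using assms by (cases rule: interleave_rules_cases) simp_all

lemma interleave_rules_in_cons_paths_from:
  assumes "\<forall>i < n. rule_step R g P A i" "P 0 = Fact x"
  shows "map (interleave_rules P A) [0..<2 * n + 1] \<in> cons_paths_from R PlF (pos_to_gen g) x"
proof -
  let ?q = "map (interleave_rules P A) [0..<2 * n + 1]"
  have step: "rule_step R g P A (j div 2)" if "j < length ?q - 1" for j
    using assms(1) that by simp
  have "gedge R (?q ! j) (?q ! Suc j)" if "j < length ?q - 1" for j
    using interleave_rules_gedge[OF step[OF that]] that by (simp del: upt_Suc)
  moreover have "hd ?q = Fact x"
    using assms(2) by (simp add: hd_map del: upt_Suc)
  moreover have "pos_to_gen g (take (Suc j) ?q) = ?q ! Suc j"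
    if "j < length ?q - 1" "owner (?q ! j) = PlF" for j
    using interleave_rules_consistent[OF step] that
    by (simp add: pos_to_gen_apply last_take_Suc del: upt_Suc)
  ultimately show ?thesis
    unfolding cons_paths_from_iff is_fin_path_def cons_fin_def by (simp add: is_state_def del: upt_Suc)
qed

lemma interleave_rules_in_max_paths:
  assumes "\<forall>i. rule_step R g P A i" "P 0 = Fact x"
  shows "BInf (smap (interleave_rules P A) nats) \<in> max_paths R (pos_to_gen g) x"
  using assms interleave_rules_gedge interleave_rules_consistent
  unfolding BInf_in_max_paths_iff cons_inf_def pos_to_gen_apply
  by (simp add: last_stake_Suc del: stake.simps)

lemma fin_graph_branch_in_max_paths:
  assumes ps: "ps \<noteq> []" "hd ps = Fact x" "set ps \<subseteq> graph_nodes R g x"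
    "\<forall>i < length ps - 1. (ps ! i, ps ! Suc i) \<in> graph_edges R g x"
    "\<not> (\<exists>s \<in> graph_nodes R g x. (last ps, s) \<in> graph_edges R g x)"
  shows "BFin ps \<in> even_positions ` max_paths R (pos_to_gen g) x"
proof -
  define n where "n = length ps - 1"
  have n: "length ps = Suc n" "last ps = ps ! n"
    using ps(1) unfolding n_def by (simp_all add: last_conv_nth)
  have "\<forall>i. \<exists>B. i < n \<longrightarrow>
      is_fact (ps ! i) \<and> (fact_of (ps ! i), B) \<in> R \<and> ps ! Suc i = g (Rule (fact_of (ps ! i)) B)"
    using ps(4) graph_edge_rule_step unfolding n_def by blast
  then obtain A where A: "\<forall>i < n. rule_step R g ((!) ps) A i"
    unfolding rule_step_def by (metis choice)
  let ?q = "map (interleave_rules ((!) ps) A) [0..<2 * n + 1]"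
  have C: "?q \<in> cons_paths_from R PlF (pos_to_gen g) x"
    using interleave_rules_in_cons_paths_from[OF A] ps(1,2) by (simp add: hd_conv_nth)
  have last: "last ?q = last ps"
    using n by (simp add: last_conv_nth del: upt_Suc)
  have "\<not> has_succ R (last ps)"
  proof
    assume "has_succ R (last ps)"
    moreover have "last ps \<in> graph_nodes R g x"
      using ps(1,3) by auto
    moreover obtain y where "last ps = Fact y"
      using calculation(2) unfolding graph_nodes_def by (cases "last ps") auto
    moreover from calculation obtain B where "(y, B) \<in> R"
      unfolding has_succ_def by (auto simp: gedge_Fact_iff)
    ultimately have "(last ps, g (Rule y B)) \<in> graph_edges R g x"
      using graph_edgeI by simp
    then show False
      using ps(5) graph_edge_target by blast
  qed
  then have "BFin ?q \<in> max_paths R (pos_to_gen g) x"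
    using C last unfolding cons_paths_from_iff BFin_in_max_paths_iff by simp
  moreover have "even_positions (BFin ?q) = BFin (map ((!) ps) [0..<length ps])"
    using n by (simp del: upt_Suc)
  then have "even_positions (BFin ?q) = BFin ps"
    by (simp only: map_nth)
  ultimately show ?thesis
    by (metis image_eqI)
qed

lemma fin_max_path_in_graph_branches:
  assumes q: "BFin q \<in> max_paths R (pos_to_gen g) x"
  shows "even_positions (BFin q) \<in> BJ (graph_nodes R g x, graph_edges R g x, id) (Fact x)"
proof -
  have Q: "is_fin_path R q" "hd q = Fact x" "\<not> has_succ R (last q)"
    and C: "q \<in> cons_paths_from R PlF (pos_to_gen g) x"
    using q unfolding BFin_in_max_paths_iff cons_paths_from_iff by simp_all
  define k where "k = length q div 2"
  have len: "length q = 2 * k + 1"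
    using max_path_odd_length[OF frame q] unfolding k_def by presburger
  then have "q \<noteq> []"
    by auto
  define ps where "ps = map (\<lambda>i. q ! (2 * i)) [0..<Suc k]"
  have ps: "length ps = Suc k" "i \<le> k \<Longrightarrow> ps ! i = q ! (2 * i)" for i
    unfolding ps_def by (simp_all del: upt_Suc)
  have fact: "is_fact (q ! (2 * i))" if "i \<le> k" for i
    using fin_path_is_fact_nth_iff[OF Q(1,2), of "2 * i"] that len by simp
  have "set ps \<subseteq> graph_nodes R g x"
  proof
    fix s
    assume "s \<in> set ps"
    then obtain i where "i \<le> k" "s = q ! (2 * i)"
      unfolding ps_def by (auto simp del: upt_Suc simp: less_Suc_eq_le)
    moreover have "q ! (2 * i) \<in> set q"
      using \<open>i \<le> k\<close> len by simp
    ultimately show "s \<in> graph_nodes R g x"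
      using C fact[of i] unfolding graph_nodes_def by blast
  qed
  moreover have "(ps ! i, ps ! Suc i) \<in> graph_edges R g x" if "i < k" for i
  proof -
    have "take (2 * i + 1) q @ [q ! (2 * i + 1), q ! (2 * i + 2)] \<in> cons_paths_from R PlF (pos_to_gen g) x"
      using take_in_cons_paths_from[OF C, of "2 * i + 3"] take_two_more[of "2 * i" q] that len by simp
    moreover have "take (2 * i + 1) q \<noteq> []" "last (take (2 * i + 1) q) = q ! (2 * i)"
      using that len last_take_Suc[of "2 * i" q] by (simp_all, auto)
    ultimately have "(q ! (2 * i), q ! (2 * i + 2)) \<in> graph_edges R g x"
      using two_step_extension_graph_edge fact[of i] that by fastforce
    then show ?thesis
      using ps(2)[of i] ps(2)[of "Suc i"] that by simp
  qed
  moreover have "\<not> (\<exists>s. (last q, s) \<in> graph_edges R g x)"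
    using Q(3) unfolding graph_edges_def has_succ_def by (auto simp: gedge_Fact_iff)
  moreover have "last ps = last q" "hd ps = Fact x" "ps \<noteq> []"
    using len Q(2) ps \<open>q \<noteq> []\<close> by (simp_all add: last_conv_nth hd_conv_nth ps_def del: upt_Suc)
  moreover have "even_positions (BFin q) = BFin (map id ps)"
    unfolding ps_def k_def by simp
  ultimately show ?thesis
    using BFin_in_BJ[of ps "Fact x" "graph_nodes R g x" "graph_edges R g x" id] ps(1) by auto
qed

lemma inf_graph_branch_in_max_paths:
  assumes P: "shd P = Fact x" "\<forall>i. P !! i \<in> graph_nodes R g x \<and> (P !! i, P !! Suc i) \<in> graph_edges R g x"
  shows "BInf P \<in> even_positions ` max_paths R (pos_to_gen g) x"
proof -
  have "\<forall>i. \<exists>B. is_fact (P !! i) \<and> (fact_of (P !! i), B) \<in> R \<and> P !! Suc i = g (Rule (fact_of (P !! i)) B)"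
    using P(2) graph_edge_rule_step by blast
  then obtain A where "\<forall>i. rule_step R g ((!!) P) A i"
    unfolding rule_step_def by (metis choice)
  then have "BInf (smap (interleave_rules ((!!) P) A) nats) \<in> max_paths R (pos_to_gen g) x"
    using interleave_rules_in_max_paths P(1) by simp
  moreover have "even_positions (BInf (smap (interleave_rules ((!!) P) A) nats)) = BInf P"
    by (simp add: stream_eqI)
  ultimately show ?thesis
    by (metis image_eqI)
qed

lemma inf_max_path_in_graph_branches:
  assumes q: "BInf q \<in> max_paths R (pos_to_gen g) x"
  shows "even_positions (BInf q) \<in> BJ (graph_nodes R g x, graph_edges R g x, id) (Fact x)"
proof -
  have Q: "shd q = Fact x" "\<forall>i. gedge R (q !! i) (q !! Suc i)"
    using q by (simp_all add: BInf_in_max_paths_iff)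
  have fact: "is_fact (q !! (2 * i))" for i
    using inf_path_is_fact_nth_iff[OF Q] by simp
  have "q !! (2 * i) \<in> set (stake (Suc (2 * i)) q)" for i
    using last_in_set[of "stake (Suc (2 * i)) q"] unfolding last_stake_Suc by simp
  then have "q !! (2 * i) \<in> graph_nodes R g x" for i
    using stake_max_path_in_cons_paths_from[OF q, of "2 * i"] fact[of i] unfolding graph_nodes_def by blast
  moreover have "(q !! (2 * i), q !! (2 * Suc i)) \<in> graph_edges R g x" for i
  proof -
    have "stake (Suc (2 * i)) q @ [q !! Suc (2 * i), q !! Suc (Suc (2 * i))]
        \<in> cons_paths_from R PlF (pos_to_gen g) x"
      using stake_max_path_in_cons_paths_from[OF q, of "Suc (Suc (2 * i))"]
      unfolding stake_Suc_Suc .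
    from two_step_extension_graph_edge[OF this] show ?thesis
      using fact[of i] by (simp add: last_stake_Suc del: stake.simps)
  qed
  ultimately have "BInf (smap id (smap (\<lambda>i. q !! (2 * i)) nats)) \<in> BJ (graph_nodes R g x, graph_edges R g x, id) (Fact x)"
    using Q(1) by (intro BInf_in_BJ) simp_all
  then show ?thesis
    unfolding stream.map_id by simp
qed

lemma BJ_filtered_play_graph:
  "BJ (filter_rules (play_graph R PlF g x)) (Fact x) = even_positions ` max_paths R (pos_to_gen g) x"
  unfolding filtered_play_graph
proof (intro equalityI subsetI)
  fix b
  assume "b \<in> BJ (graph_nodes R g x, graph_edges R g x, id) (Fact x)"
  then show "b \<in> even_positions ` max_paths R (pos_to_gen g) x"
    by (cases rule: BJ_cases) (simp_all add: fin_graph_branch_in_max_paths inf_graph_branch_in_max_paths)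
next
  fix b
  assume "b \<in> even_positions ` max_paths R (pos_to_gen g) x"
  then obtain c where "c \<in> max_paths R (pos_to_gen g) x" "b = even_positions c"
    by blast
  then show "b \<in> BJ (graph_nodes R g x, graph_edges R g x, id) (Fact x)"
    by (cases c) (simp_all add: fin_max_path_in_graph_branches inf_max_path_in_graph_branches
        del: even_positions.simps)
qed

end

lemma BJ_neg_labels:
  assumes "just_frame neg lit Fd R" "BJ J n = even_positions ` max_paths R \<tau> x"
  shows "BJ (neg_labels neg J) n = (\<lambda>b. bmap neg (del_rules b)) ` max_paths R \<tau> x"
proof -
  obtain N E lab where J: "J = (N, E, lab)"
    by (metis prod_cases3)
  have "BJ (neg_labels neg J) n = bmap (\<lambda>s. neg (fact_of s)) ` BJ J n"
    unfolding J neg_labels_def prod.case by (rule BJ_relabel)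
  also have "\<dots> = (\<lambda>b. bmap neg (del_rules b)) ` max_paths R \<tau> x"
    unfolding assms(2) image_image
  proof (rule image_cong[OF refl])
    fix b
    assume "b \<in> max_paths R \<tau> x"
    then show "bmap (\<lambda>s. neg (fact_of s)) (even_positions b) = bmap neg (del_rules b)"
      using del_rules_max_path[OF assms(1)] by (simp add: bmap_bmap o_def)
  qed
  finally show ?thesis .
qed

theorem mainTheorem8:
  fixes neg :: "'f \<Rightarrow> 'f" and lit :: "tv \<Rightarrow> 'f" and Fd :: "'f set"
    and R :: "('f \<times> 'f set) set" and B :: "'f branch \<Rightarrow> 'f" and x :: 'f
  assumes "fact_space neg lit"
    and "just_frame neg lit Fd R"
    and "complementary neg Fd R"
    and "consistent_be neg Fd B"
    and "x \<in> Fd"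
  shows "(\<forall>g I. positional_strategy R PlF g \<and> is_interp neg lit I \<longrightarrow>
            val (J_pos neg R g x) (Fact x) B I =
            tv_neg (tv_Sup {u R B I x \<sigma> (pos_to_gen g) | \<sigma>. \<sigma> \<in> gen_strategies R PlT}))
       \<and> (\<forall>\<tau> I. \<tau> \<in> gen_strategies R PlF \<and> is_interp neg lit I \<longrightarrow>
            val (J_gen neg R \<tau> x) [Fact x] B I =
            tv_neg (tv_Sup {u R B I x \<sigma> \<tau> | \<sigma>. \<sigma> \<in> gen_strategies R PlT}))"
proof (intro conjI allI impI; elim conjE)
  fix g I
  assume g: "positional_strategy R PlF g" and I: "is_interp neg lit I"
  have "BJ (J_pos neg R g x) (Fact x) = (\<lambda>b. bmap neg (del_rules b)) ` max_paths R (pos_to_gen g) x"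
    unfolding J_pos_def using BJ_neg_labels[OF assms(2) BJ_filtered_play_graph[OF assms(2) g]] .
  then show "val (J_pos neg R g x) (Fact x) B I =
      tv_neg (tv_Sup {u R B I x \<sigma> (pos_to_gen g) | \<sigma>. \<sigma> \<in> gen_strategies R PlT})"
    by (rule val_eq_tv_neg_Sup_u[OF assms(2,5,4) I positional_strategy_gen[OF g]])
next
  fix \<tau> I
  assume \<tau>: "\<tau> \<in> gen_strategies R PlF" and I: "is_interp neg lit I"
  have "BJ (J_gen neg R \<tau> x) [Fact x] = (\<lambda>b. bmap neg (del_rules b)) ` max_paths R \<tau> x"
    unfolding J_gen_def using BJ_neg_labels[OF assms(2) BJ_filtered_play_tree[OF assms(2) \<tau>]] .
  then show "val (J_gen neg R \<tau> x) [Fact x] B I =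
      tv_neg (tv_Sup {u R B I x \<sigma> \<tau> | \<sigma>. \<sigma> \<in> gen_strategies R PlT})"
    by (rule val_eq_tv_neg_Sup_u[OF assms(2,5,4) I \<tau>])
qed

end
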